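(* Let $\alpha\in(0,1)$ and $\Omega\in\Delta$, where $\Delta$ is either the set of probability measures on $\Theta_1$ or the set of probability distributions on a fixed finite set $\{\theta_1,\ldots,\theta_{M_1}\}\subset\Theta_1$; write $g_\Omega=\int f_\theta\,d\Omega(\theta)$. Consider $\sup_{\varphi\in\Phi_\alpha}\int(\varphi-\varphi_{ah})g_\Omega\,d\nu$ (problem (P)). Let $\mathcal M_0$ denote the set of finite (nonnegative) measures on $\Theta_0$, and for $\Lambda\in\mathcal M_0$ let \[ L(\varphi,\Lambda)=\int(\varphi-\varphi_{ah})g_\Omega\,d\nu-\int\Big(\int\varphi f_\theta\,d\nu-\alpha\Big)d\Lambda(\theta). \] Then: 1. $\Phi^\ast_\Omega:=\arg\max_{\varphi\in\Phi_\alpha}\int(\varphi-\varphi_{ah})g_\Omega\,d\nu\neq\emptyset$. 2. For every $\Lambda\in\mathcal M_0$, $\Phi^\ast_{\Omega,\Lambda}:=\arg\max_{\varphi\in\Phi}L(\varphi,\Lambda)\neq\emptyset$, and every $\varphi\in\Phi^\ast_{\Omega,\Lambda}$ is of the form $\varphi=1$ on $\{g_\Omega>\int f_\theta\,d\Lambda(\theta)\}$, $\varphi=\varkappa$ on $\{g_\Omega=\int f_\theta\,d\Lambda(\theta)\}$, $\varphi=0$ on $\{g_\Omega<\int f_\theta\,d\Lambda(\theta)\}$, for some $\varkappa\in\Phi$. 3. The value of (P) equals $\inf_{\Lambda\in\mathcal M_0}\sup_{\varphi\in\Phi}L(\varphi,\Lambda)$. 4. Let $\mathcal M_0^\ast=\arg\min_{\Lambda\in\mathcal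 M_0}\sup_{\varphi\in\Phi}L(\varphi,\Lambda)$. Assume $\mathcal M_0^\ast\neq\emptyset$ and that for every $\Lambda^\ast\in\mathcal M_0^\ast$ the set $\{y:g_\Omega(y)=\int f_\theta(y)\,d\Lambda^\ast(\theta)\}$ has $\nu$-measure zero, so that $\Phi^\ast_{\Omega,\Lambda^\ast}$ has the $\nu$-a.e. unique element $\varphi^\ast_{\Omega,\Lambda^\ast}=\mathbb 1\{g_\Omega>\int f_\theta\,d\Lambda^\ast(\theta)\}$. Then for any $\Lambda_1^\ast,\Lambda_2^\ast\in\mathcal M_0^\ast$ and any $\tilde\varphi_1,\tilde\varphi_2\in\Phi^\ast_\Omega$, $\varphi^\ast_{\Omega,\Lambda_1^\ast}=\varphi^\ast_{\Omega,\Lambda_2^\ast}=\tilde\varphi_1=\tilde\varphi_2$ $\nu$-a.e. 5. If $\Lambda^\ast\in\mathcal M_0^\ast$ with $\Lambda^\ast(\Theta_0)>0$, then $\Lambda^\ast/\Lambda^\ast(\Theta_0)$ is a least favorable distribution for $g_\Omega$. 6. If a least favorable distribution $\Lambda^\ast_\Omega$ for $g_\Omega$ exists, then $\mathrm{cv}_\Omega\Lambda^\ast_\Omega\in\mathcal M_0^\ast$, where $\mathrm{cv}_\Omega$ is the critical value of the level-$\alpha$ Neyman–Pearson test of the density $\int f_\theta\,d\Lambda^\ast_\Omega(\theta)$ against $g_\Omega$.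
   Context: A random element $Y$ takes values in a metric space $\mathcal Y$ with density $f_\theta$ w.r.t. a $\sigma$-finite measure $\nu$, $\theta\in\Theta\subset\mathbb R^k$, $(\theta,y)\mapsto f_\theta(y)$ jointly measurable; $\Theta_0,\Theta_1\subset\Theta$ are disjoint Borel sets. $\Phi$ is the set of measurable $\varphi:\mathcal Y\to[0,1]$, $\Phi_\alpha=\{\varphi\in\Phi:\sup_{\theta\in\Theta_0}\int\varphi f_\theta\,d\nu\le\alpha\}$, $\varphi_{ah}\in\Phi_\alpha$ a fixed test. For an alternative density $g$ and a probability distribution $\Lambda$ on $\Theta_0$, write $h_\Lambda=\int f_\theta\,d\Lambda(\theta)$ and $\beta_\Lambda=\sup\{\int\varphi g\,d\nu:\varphi\in\Phi,\ \int\varphi h_\Lambda\,d\nu\le\alpha\}$; $\Lambda$ is a least favorable distribution (for $g$) if $\beta_\Lambda\le\beta_{\Lambda'}$ for all probability distributions $\Lambda'$ on $\Theta_0$. The level-$\alpha$ Neyman–Pearson test of $h_\Lambda$ against $g$ rejects when $g>\mathrm{cv}\,h_\Lambda$, randomizes with constant probability $\varkappa\in[0,1]$ on $g=\mathrm{cv}\,h_\Lambda$, with $\mathrm{cv}\ge0,\varkappa$ chosen so its rejection probability under $h_\Lambda$ equals $\alpha$. *)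

theory Defs
  imports "HOL-Probability.Probability"
begin

definition Phi :: "'y measure \<Rightarrow> ('y \<Rightarrow> real) set" where
  "Phi N = {\<phi> \<in> borel_measurable N. \<forall>y\<in>space N. 0 \<le> \<phi> y \<and> \<phi> y \<le> 1}"

definition Phi_alpha :: "'y measure \<Rightarrow> ('t \<Rightarrow> 'y \<Rightarrow> real) \<Rightarrow> 't set \<Rightarrow> real \<Rightarrow> ('y \<Rightarrow> real) set" where
  "Phi_alpha N f Theta0 \<alpha> = {\<phi> \<in> Phi N. \<forall>\<theta>\<in>Theta0. (\<integral>y. \<phi> y * f \<theta> y \<partial>N) \<le> \<alpha>}"

definition mix :: "'t measure \<Rightarrow> ('t \<Rightarrow> 'y \<Rightarrow> real) \<Rightarrow> 'y \<Rightarrow> real" where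
  "mix \<Lambda> f y = (\<integral>\<theta>. f \<theta> y \<partial>\<Lambda>)"

definition finite_measures_on :: "'t::topological_space set \<Rightarrow> 't measure set" where
  "finite_measures_on A = {\<Lambda>. sets \<Lambda> = sets (restrict_space borel A) \<and> finite_measure \<Lambda>}"

definition prob_distributions_on :: "'t::topological_space set \<Rightarrow> 't measure set" where
  "prob_distributions_on A = {\<Lambda>. sets \<Lambda> = sets (restrict_space borel A) \<and> prob_space \<Lambda>}"

definition beta_LF :: "'y measure \<Rightarrow> ('t \<Rightarrow> 'y \<Rightarrow> real) \<Rightarrow> real \<Rightarrow> ('y \<Rightarrow> real) \<Rightarrow> 't measure \<Rightarrow> real" where
  "beta_LF N f \<alpha> g \<Lambda> = Sup {(\<integral>y. \<phi> y * g y \<partial>N) | \<phi>. \<phi> \<in> Phi N \<and> (\<integral>y. \<phi> y * mix \<Lambda> f y \<partial>N) \<le> \<alpha>}"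

definition least_favorable ::
  "'y measure \<Rightarrow> ('t::topological_space \<Rightarrow> 'y \<Rightarrow> real) \<Rightarrow> 't set \<Rightarrow> real \<Rightarrow> ('y \<Rightarrow> real) \<Rightarrow> 't measure \<Rightarrow> bool" where
  "least_favorable N f Theta0 \<alpha> g \<Lambda> \<longleftrightarrow> \<Lambda> \<in> prob_distributions_on Theta0 \<and>
     (\<forall>\<Lambda>'\<in>prob_distributions_on Theta0. beta_LF N f \<alpha> g \<Lambda> \<le> beta_LF N f \<alpha> g \<Lambda>')"

definition NP_test :: "('y \<Rightarrow> real) \<Rightarrow> ('y \<Rightarrow> real) \<Rightarrow> real \<Rightarrow> real \<Rightarrow> 'y \<Rightarrow> real" where
  "NP_test h g cv \<kappa> y = (if g y > cv * h y then 1 else if g y = cv * h y then \<kappa> else 0)"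

definition is_level_NP :: "'y measure \<Rightarrow> real \<Rightarrow> ('y \<Rightarrow> real) \<Rightarrow> ('y \<Rightarrow> real) \<Rightarrow> real \<Rightarrow> real \<Rightarrow> bool" where
  "is_level_NP N \<alpha> h g cv \<kappa> \<longleftrightarrow> 0 \<le> cv \<and> 0 \<le> \<kappa> \<and> \<kappa> \<le> 1 \<and>
     (\<integral>y. NP_test h g cv \<kappa> y * h y \<partial>N) = \<alpha>"

definition objP :: "'y measure \<Rightarrow> ('y \<Rightarrow> real) \<Rightarrow> ('y \<Rightarrow> real) \<Rightarrow> ('y \<Rightarrow> real) \<Rightarrow> real" where
  "objP N \<phi>ah g \<phi> = (\<integral>y. (\<phi> y - \<phi>ah y) * g y \<partial>N)"

definition lagr :: "'y measure \<Rightarrow> ('t \<Rightarrow> 'y \<Rightarrow> real) \<Rightarrow> real \<Rightarrow> ('y \<Rightarrow> real) \<Rightarrow> ('y \<Rightarrow> real)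
    \<Rightarrow> ('y \<Rightarrow> real) \<Rightarrow> 't measure \<Rightarrow> real" where
  "lagr N f \<alpha> \<phi>ah g \<phi> \<Lambda> = objP N \<phi>ah g \<phi> - (\<integral>\<theta>. ((\<integral>y. \<phi> y * f \<theta> y \<partial>N) - \<alpha>) \<partial>\<Lambda>)"

definition dualf :: "'y measure \<Rightarrow> ('t \<Rightarrow> 'y \<Rightarrow> real) \<Rightarrow> real \<Rightarrow> ('y \<Rightarrow> real) \<Rightarrow> ('y \<Rightarrow> real)
    \<Rightarrow> 't measure \<Rightarrow> real" where
  "dualf N f \<alpha> \<phi>ah g \<Lambda> = (SUP \<phi>\<in>Phi N. lagr N f \<alpha> \<phi>ah g \<phi> \<Lambda>)"

end

theory Submission
  imports Defs "HOL-Library.Function_Algebras"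
begin

section \<open>Lagrange multipliers for convex programs\<close>

instantiation "fun" :: (type, real_vector) real_vector
begin

definition scaleR_fun :: "real \<Rightarrow> ('a \<Rightarrow> 'b) \<Rightarrow> 'a \<Rightarrow> 'b" where
  "scaleR_fun r f = (\<lambda>x. r *\<^sub>R f x)"

instance
  by standard (simp_all add: scaleR_fun_def fun_eq_iff scaleR_add_right scaleR_add_left)

end

lemma scaleR_fun_apply [simp]: "(r *\<^sub>R f) x = r *\<^sub>R f x"
  by (simp add: scaleR_fun_def)

lemma Lagrange_multiplier_convex:
  fixes G :: "'a::real_vector set"
  assumes J: "concave_on G J" and c: "convex_on G c"
    and bound: "\<And>x. x \<in> G \<Longrightarrow> c x \<le> 0 \<Longrightarrow> J x \<le> V"
    and slater: "p \<in> G" "c p < 0"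
  shows "\<exists>\<mu>\<ge>0. \<forall>x\<in>G. J x - \<mu> * c x \<le> V"
proof -
  have slope_le: "(J x1 - V) / c x1 \<le> (V - J x2) / - c x2"
    if x1: "x1 \<in> G" "0 < c x1" and x2: "x2 \<in> G" "c x2 < 0" for x1 x2
  proof -
    have pos: "0 < c x1 - c x2" using x1 x2 by simp
    define t where "t = c x1 / (c x1 - c x2)"
    have t: "0 \<le> t" "t \<le> 1" using x1 x2 pos by (auto simp: t_def field_simps)
    have ct: "t * (c x1 - c x2) = c x1" using pos by (simp add: t_def)
    define z where "z = (1 - t) *\<^sub>R x1 + t *\<^sub>R x2"
    have "c z \<le> (1 - t) * c x1 + t * c x2"
      unfolding z_def using convex_onD[OF c] t x1 x2 by blast
    also have "\<dots> = c x1 - t * (c x1 - c x2)" by (simp add: algebra_simps)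
    finally have "J z \<le> V"
      using bound convexD_alt[OF convex_on_imp_convex[OF c]] t x1 x2 ct unfolding z_def by simp
    moreover have "(1 - t) * J x1 + t * J x2 \<le> J z"
      unfolding z_def using concave_onD[OF J] t x1 x2 by blast
    ultimately have "(c x1 - c x2) * ((1 - t) * J x1 + t * J x2) \<le> (c x1 - c x2) * V"
      using pos by (intro mult_left_mono) auto
    moreover have "(c x1 - c x2) * ((1 - t) * J x1 + t * J x2)
        = (c x1 - c x2) * J x1 - t * (c x1 - c x2) * J x1 + t * (c x1 - c x2) * J x2"
      by (simp add: algebra_simps)
    ultimately have "- c x2 * (J x1 - V) \<le> c x1 * (V - J x2)"
      unfolding ct by (simp add: algebra_simps)
    thus ?thesis using x1 x2 by (simp add: field_simps)
  qed
  define A where "A = insert 0 {(J x - V) / c x | x. x \<in> G \<and> 0 < c x}"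
  have A_le: "a \<le> (V - J x) / - c x" if "a \<in> A" "x \<in> G" "c x < 0" for a x
    using that slope_le bound[of x] unfolding A_def by (auto simp: divide_nonneg_neg)
  have "bdd_above A" using A_le slater unfolding bdd_above_def by blast
  hence le_Sup: "a \<le> Sup A" if "a \<in> A" for a using that by (simp add: cSup_upper)
  have "J x - Sup A * c x \<le> V" if x: "x \<in> G" for x
  proof (cases "0 < c x")
    case True
    hence "(J x - V) / c x \<le> Sup A" using x le_Sup unfolding A_def by blast
    thus ?thesis using True by (simp add: field_simps)
  next
    case False
    show ?thesis
    proof (cases "c x = 0")
      case True thus ?thesis using bound x by simp
    next
      case False
      hence neg: "c x < 0" using \<open>\<not> 0 < c x\<close> by simp
      have "Sup A \<le> (V - J x) / - c x"
        using A_le x neg by (intro cSup_least) (auto simp: A_def)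
      thus ?thesis using neg by (simp add: field_simps)
    qed
  qed
  moreover have "0 \<le> Sup A" using le_Sup unfolding A_def by blast
  ultimately show ?thesis by blast
qed

lemma Lagrange_multipliers_convex:
  fixes G :: "'a::real_vector set" and c :: "'i \<Rightarrow> 'a \<Rightarrow> real"
  assumes "finite F" and J: "concave_on G J" and c: "\<And>i. i \<in> F \<Longrightarrow> convex_on G (c i)"
    and bound: "\<And>x. x \<in> G \<Longrightarrow> (\<forall>i\<in>F. c i x \<le> 0) \<Longrightarrow> J x \<le> V"
    and slater: "p \<in> G" "\<And>i. i \<in> F \<Longrightarrow> c i p < 0"
  shows "\<exists>\<mu>. (\<forall>i\<in>F. 0 \<le> \<mu> i) \<and> (\<forall>x\<in>G. J x - (\<Sum>i\<in>F. \<mu> i * c i x) \<le> V)"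
  using assms(1) J c bound slater(2)
proof (induction F arbitrary: J rule: finite_induct)
  case empty
  thus ?case by simp
next
  case (insert a F)
  define G' where "G' = {x \<in> G. \<forall>i\<in>F. c i x \<le> 0}"
  have "convex G'"
  proof (rule convexI)
    fix x y u v assume "x \<in> G'" "y \<in> G'" "0 \<le> u" "0 \<le> v" "u + v = (1::real)"
    moreover have "c i (u *\<^sub>R x + v *\<^sub>R y) \<le> u * c i x + v * c i y" if "i \<in> F" for i
      using insert.prems(2) that calculation unfolding convex_on_def G'_def by auto
    ultimately show "u *\<^sub>R x + v *\<^sub>R y \<in> G'"
      using convexD[OF concave_on_imp_convex[OF insert.prems(1)]]
      unfolding G'_def by (fastforce intro: order_trans add_nonpos_nonpos mult_nonneg_nonpos)
  qed
  moreover have "G' \<subseteq> G" unfolding G'_def by blast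
  ultimately have "concave_on G' J" "convex_on G' (c a)"
    using insert.prems(1,2) by (auto simp: concave_on_def intro: convex_on_subset)
  hence "\<exists>m\<ge>0. \<forall>x\<in>G'. J x - m * c a x \<le> V"
    using insert.prems slater(1)
    by (intro Lagrange_multiplier_convex[where p=p]) (auto simp: G'_def less_imp_le)
  then obtain m where m: "0 \<le> m" "\<forall>x\<in>G'. J x - m * c a x \<le> V" by blast
  have "concave_on G (\<lambda>x. J x - m * c a x)"
    using insert.prems m(1) by (intro concave_on_diff convex_on_cmul) auto
  then obtain \<mu> where \<mu>: "\<forall>i\<in>F. 0 \<le> \<mu> i" "\<forall>x\<in>G. J x - m * c a x - (\<Sum>i\<in>F. \<mu> i * c i x) \<le> V"
    using insert.IH[of "\<lambda>x. J x - m * c a x"] insert.prems m(2) unfolding G'_def by auto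
  have "(\<Sum>i\<in>insert a F. (\<mu>(a := m)) i * c i x) = m * c a x + (\<Sum>i\<in>F. \<mu> i * c i x)" for x
    using insert.hyps by (auto intro!: sum.cong)
  thus ?case using \<mu> m(1) by (intro exI[of _ "\<mu>(a := m)"]) (auto simp: algebra_simps)
qed

lemma Phi_measurable [measurable_dest]: "\<phi> \<in> Phi M \<Longrightarrow> \<phi> \<in> borel_measurable M"
  by (simp add: Phi_def)

lemma Phi_bounds: "\<phi> \<in> Phi M \<Longrightarrow> y \<in> space M \<Longrightarrow> 0 \<le> \<phi> y \<and> \<phi> y \<le> 1"
  by (simp add: Phi_def)

lemma Phi_abs_le: "\<phi> \<in> Phi M \<Longrightarrow> y \<in> space M \<Longrightarrow> \<bar>\<phi> y\<bar> \<le> 1"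
  by (simp add: Phi_def)

lemma Phi_abs_diff_le: "\<phi> \<in> Phi M \<Longrightarrow> \<psi> \<in> Phi M \<Longrightarrow> y \<in> space M \<Longrightarrow> \<bar>\<phi> y - \<psi> y\<bar> \<le> 1"
  using Phi_bounds[of \<phi> M y] Phi_bounds[of \<psi> M y] by (auto simp: abs_le_iff)

lemma convex_Phi: "convex (Phi M)"
proof (rule convexI)
  fix \<phi> \<psi> and u v :: real
  assume \<phi>: "\<phi> \<in> Phi M" and \<psi>: "\<psi> \<in> Phi M" and uv: "0 \<le> u" "0 \<le> v" "u + v = 1"
  have "u * \<phi> y + v * \<psi> y \<le> u * 1 + v * 1" if "y \<in> space M" for y
    using Phi_bounds[OF \<phi> that] Phi_bounds[OF \<psi> that] uv by (intro add_mono mult_left_mono) auto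
  moreover have "0 \<le> u * \<phi> y + v * \<psi> y" if "y \<in> space M" for y
    using Phi_bounds[OF \<phi> that] Phi_bounds[OF \<psi> that] uv by simp
  moreover have "u *\<^sub>R \<phi> + v *\<^sub>R \<psi> = (\<lambda>y. u * \<phi> y + v * \<psi> y)" by (simp add: fun_eq_iff)
  ultimately show "u *\<^sub>R \<phi> + v *\<^sub>R \<psi> \<in> Phi M"
    using \<phi> \<psi> uv by (auto simp: Phi_def)
qed

lemma Phi_zero: "(\<lambda>_. 0) \<in> Phi N"
  by (simp add: Phi_def)

lemma Phi_one: "(\<lambda>_. 1) \<in> Phi N"
  by (simp add: Phi_def)

lemma Phi_alpha_imp_Phi: "\<phi> \<in> Phi_alpha M f T \<alpha> \<Longrightarrow> \<phi> \<in> Phi M"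
  by (simp add: Phi_alpha_def)

lemma null_measure_finite_measures_on: "null_measure (restrict_space borel A) \<in> finite_measures_on A"
  by (auto simp: finite_measures_on_def intro!: finite_measureI)

lemma Phi_alpha_Un: "Phi_alpha N f (T \<union> T') \<alpha> = Phi_alpha N f T \<alpha> \<inter> Phi_alpha N f T' \<alpha>"
  by (auto simp: Phi_alpha_def)

lemma integrable_bounded_mult:
  fixes \<phi> w :: "'a \<Rightarrow> real"
  assumes w: "integrable M w" and \<phi>: "\<phi> \<in> borel_measurable M" "\<And>x. x \<in> space M \<Longrightarrow> \<bar>\<phi> x\<bar> \<le> B"
  shows "integrable M (\<lambda>x. \<phi> x * w x)"
proof (rule Bochner_Integration.integrable_bound[OF integrable_mult_right[OF w, of B]])
  show "(\<lambda>x. \<phi> x * w x) \<in> borel_measurable M" using \<phi>(1) borel_measurable_integrable[OF w] by measurable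
  show "AE x in M. norm (\<phi> x * w x) \<le> norm (B * w x)"
  proof (rule AE_I2)
    fix x assume "x \<in> space M"
    hence "\<bar>\<phi> x\<bar> \<le> \<bar>B\<bar>" using \<phi>(2) by fastforce
    thus "norm (\<phi> x * w x) \<le> norm (B * w x)" by (simp add: abs_mult mult_right_mono)
  qed
qed

lemma abs_integral_bounded_mult_le:
  fixes \<phi> w :: "'a \<Rightarrow> real"
  assumes w: "integrable M w" "\<And>x. x \<in> space M \<Longrightarrow> 0 \<le> w x"
    and \<phi>: "\<phi> \<in> borel_measurable M" "\<And>x. x \<in> space M \<Longrightarrow> \<bar>\<phi> x\<bar> \<le> B"
  shows "\<bar>\<integral>x. \<phi> x * w x \<partial>M\<bar> \<le> B * (\<integral>x. w x \<partial>M)"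
proof -
  have "\<bar>\<integral>x. \<phi> x * w x \<partial>M\<bar> \<le> (\<integral>x. \<bar>\<phi> x * w x\<bar> \<partial>M)"
    by (rule integral_abs_bound)
  also have "\<dots> \<le> (\<integral>x. B * w x \<partial>M)"
    using w \<phi>(2) integrable_bounded_mult[OF w(1) \<phi>]
    by (intro integral_mono integrable_abs) (auto simp: abs_mult intro: mult_right_mono)
  finally show ?thesis by simp
qed

lemma integrable_Phi_mult: "integrable M w \<Longrightarrow> \<phi> \<in> Phi M \<Longrightarrow> integrable M (\<lambda>x. \<phi> x * w x)"
  by (rule integrable_bounded_mult[where B=1]) (auto simp: Phi_abs_le)

lemma integral_Phi_convex_comb:
  assumes w: "integrable M w" and \<phi>: "\<phi> \<in> Phi M" and \<psi>: "\<psi> \<in> Phi M"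
  shows "(\<integral>x. (u *\<^sub>R \<phi> + v *\<^sub>R \<psi>) x * w x \<partial>M) = u * (\<integral>x. \<phi> x * w x \<partial>M) + v * (\<integral>x. \<psi> x * w x \<partial>M)"
proof -
  have "(\<integral>x. (u *\<^sub>R \<phi> + v *\<^sub>R \<psi>) x * w x \<partial>M) = (\<integral>x. u * (\<phi> x * w x) + v * (\<psi> x * w x) \<partial>M)"
    by (simp add: algebra_simps)
  thus ?thesis using integrable_Phi_mult[OF w \<phi>] integrable_Phi_mult[OF w \<psi>] by simp
qed

lemma tendsto_integral_Phi_mult:
  assumes w: "integrable M w" and s: "\<And>n. s n \<in> Phi M" and \<phi>: "\<phi> \<in> Phi M"
    and lim: "AE x in M. (\<lambda>n. s n x * w x) \<longlonglongrightarrow> \<phi> x * w x"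
  shows "(\<lambda>n. \<integral>x. s n x * w x \<partial>M) \<longlonglongrightarrow> (\<integral>x. \<phi> x * w x \<partial>M)"
proof (rule integral_dominated_convergence[where w="\<lambda>x. \<bar>w x\<bar>"])
  show "(\<lambda>x. \<phi> x * w x) \<in> borel_measurable M" "(\<lambda>x. s n x * w x) \<in> borel_measurable M" for n
    using integrable_Phi_mult[OF w \<phi>] integrable_Phi_mult[OF w s] by auto
  show "AE x in M. norm (s n x * w x) \<le> \<bar>w x\<bar>" for n
    using Phi_abs_le[OF s] mult_right_mono[of _ 1 "\<bar>w _\<bar>"] by (intro AE_I2) (simp add: abs_mult)
qed (use w lim in auto)

lemma Phi_indicator:
  assumes [measurable]: "Measurable.pred M P"
  shows "(\<lambda>x. if P x then 1 else 0) \<in> Phi M"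
proof -
  have "(\<lambda>x. if P x then 1 else 0 :: real) \<in> borel_measurable M" by measurable
  thus ?thesis by (simp add: Phi_def)
qed

lemma Phi_indicator_positive:
  fixes w :: "'a \<Rightarrow> real"
  assumes [measurable]: "w \<in> borel_measurable M"
  shows "(\<lambda>x. if 0 < w x then 1 else 0) \<in> Phi M"
  by (rule Phi_indicator) measurable

lemma integral_Phi_mult_le_indicator:
  fixes w :: "'a \<Rightarrow> real"
  assumes w: "integrable M w" and \<phi>: "\<phi> \<in> Phi M"
  shows "(\<integral>x. \<phi> x * w x \<partial>M) \<le> (\<integral>x. (if 0 < w x then 1 else 0) * w x \<partial>M)"
proof (rule integral_mono)
  show "integrable M (\<lambda>x. \<phi> x * w x)" "integrable M (\<lambda>x. (if 0 < w x then 1 else 0) * w x)"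
    using w \<phi> by (auto intro!: integrable_Phi_mult Phi_indicator_positive)
  show "\<phi> x * w x \<le> (if 0 < w x then 1 else 0) * w x" if "x \<in> space M" for x
    using Phi_bounds[OF \<phi> that] by (auto simp: mult_left_le_one_le mult_nonneg_nonpos)
qed

lemma Phi_maximizer_AE_indicator:
  fixes w :: "'a \<Rightarrow> real"
  assumes w: "integrable M w" and \<phi>: "\<phi> \<in> Phi M"
    and max: "(\<integral>x. (if 0 < w x then 1 else 0) * w x \<partial>M) \<le> (\<integral>x. \<phi> x * w x \<partial>M)"
  shows "AE x in M. (0 < w x \<longrightarrow> \<phi> x = 1) \<and> (w x < 0 \<longrightarrow> \<phi> x = 0)"
proof -
  define d where "d x = (if 0 < w x then 1 else 0) * w x - \<phi> x * w x" for x
  have ind: "integrable M (\<lambda>x. (if 0 < w x then 1 else 0) * w x)"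
    using w by (auto intro!: integrable_Phi_mult Phi_indicator_positive)
  have int: "integrable M d"
    unfolding d_def by (intro Bochner_Integration.integrable_diff ind integrable_Phi_mult[OF w \<phi>])
  have nonneg: "0 \<le> d x" if "x \<in> space M" for x
    using Phi_bounds[OF \<phi> that] by (auto simp: d_def mult_left_le_one_le mult_nonneg_nonpos)
  have "(\<integral>x. d x \<partial>M) \<le> 0"
    using max integrable_Phi_mult[OF w \<phi>] ind by (auto simp: d_def)
  hence "(\<integral>x. d x \<partial>M) = 0" using nonneg by (simp add: order_antisym integral_nonneg)
  hence "AE x in M. d x = 0" using integral_nonneg_eq_0_iff_AE[OF int] nonneg by (auto intro: AE_I2)
  thus ?thesis
  proof eventually_elim
    case (elim x)
    hence "((if 0 < w x then 1 else 0) - \<phi> x) * w x = 0" by (simp add: d_def left_diff_distrib)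
    thus ?case by auto
  qed
qed

section \<open>Weak compactness of the tests\<close>

definition ae_closed :: "'a measure \<Rightarrow> ('a \<Rightarrow> real) set \<Rightarrow> bool" where
  "ae_closed M K \<longleftrightarrow>
     (\<forall>s \<phi>. (\<forall>n. s n \<in> K) \<longrightarrow> \<phi> \<in> Phi M \<longrightarrow> (AE x in M. (\<lambda>n. s n x) \<longlonglongrightarrow> \<phi> x) \<longrightarrow> \<phi> \<in> K)"

lemma ae_closedD:
  "ae_closed M K \<Longrightarrow> (\<And>n. s n \<in> K) \<Longrightarrow> \<phi> \<in> Phi M \<Longrightarrow> AE x in M. (\<lambda>n. s n x) \<longlonglongrightarrow> \<phi> x \<Longrightarrow> \<phi> \<in> K"
  unfolding ae_closed_def by blast

lemma ae_closed_Int: "ae_closed M K \<Longrightarrow> ae_closed M K' \<Longrightarrow> ae_closed M (K \<inter> K')"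
  unfolding ae_closed_def by blast

definition sq_integral :: "'a measure \<Rightarrow> ('a \<Rightarrow> real) \<Rightarrow> real" where
  "sq_integral M h = (\<integral>x. (h x)\<^sup>2 \<partial>M)"

lemma sq_integral_nonneg: "0 \<le> sq_integral M h"
  by (simp add: sq_integral_def)

lemma sq_integral_diff_commute: "sq_integral M (\<lambda>x. h x - k x) = sq_integral M (\<lambda>x. k x - h x)"
  by (simp add: sq_integral_def power2_commute)

context finite_measure
begin

lemma integrable_square_bounded:
  fixes h :: "'a \<Rightarrow> real"
  assumes "h \<in> borel_measurable M" "\<And>x. x \<in> space M \<Longrightarrow> \<bar>h x\<bar> \<le> B"
  shows "integrable M (\<lambda>x. (h x)\<^sup>2)"
proof (rule integrable_const_bound[where B="B\<^sup>2"])
  show "AE x in M. norm ((h x)\<^sup>2) \<le> B\<^sup>2"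
  proof (rule AE_I2)
    fix x assume "x \<in> space M"
    hence "\<bar>h x\<bar>\<^sup>2 \<le> B\<^sup>2" using assms(2) by (intro power_mono) auto
    thus "norm ((h x)\<^sup>2) \<le> B\<^sup>2" by simp
  qed
qed (use assms(1) in simp)

lemma sq_integral_Phi_le: "\<phi> \<in> Phi M \<Longrightarrow> sq_integral M \<phi> \<le> measure M (space M)"
  unfolding sq_integral_def
  using integral_mono[of M "\<lambda>x. (\<phi> x)\<^sup>2" "\<lambda>_. 1"] integrable_square_bounded[of \<phi> 1]
  by (simp add: Phi_abs_le Phi_bounds power_le_one)

lemma sq_integral_diff_le:
  assumes K: "convex K" "K \<subseteq> Phi M" and uv: "u \<in> K" "v \<in> K"
    and d: "\<And>w. w \<in> K \<Longrightarrow> d \<le> sq_integral M w"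
  shows "sq_integral M (\<lambda>x. u x - v x) \<le> 2 * sq_integral M u + 2 * sq_integral M v - 4 * d"
proof -
  define w where "w = (1/2) *\<^sub>R u + (1/2) *\<^sub>R v"
  have "w \<in> K" unfolding w_def using convexD[OF K(1) uv] by simp
  hence "d \<le> sq_integral M w" by (rule d)
  moreover have parallelogram:
    "sq_integral M (\<lambda>x. u x - v x) = 2 * sq_integral M u + 2 * sq_integral M v - 4 * sq_integral M w"
  proof -
    have "w \<in> Phi M" "u \<in> Phi M" "v \<in> Phi M" using \<open>w \<in> K\<close> uv K(2) by auto
    hence integrable: "integrable M (\<lambda>x. (h x)\<^sup>2)" if "h \<in> {u, v, w}" for h
      using that by (auto intro!: integrable_square_bounded[where B=1] simp: Phi_abs_le)
    hence "(\<integral>x. (u x - v x)\<^sup>2 \<partial>M) = (\<integral>x. 2 * (u x)\<^sup>2 + 2 * (v x)\<^sup>2 - 4 * (w x)\<^sup>2 \<partial>M)"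
      unfolding w_def by (intro Bochner_Integration.integral_cong) (auto simp: power2_eq_square algebra_simps)
    also have "\<dots> = 2 * sq_integral M u + 2 * sq_integral M v - 4 * sq_integral M w"
      using integrable by (simp add: sq_integral_def)
    finally show ?thesis by (simp add: sq_integral_def)
  qed
  ultimately show ?thesis by linarith
qed

lemma abs_integral_small_if_sq_integral_small:
  assumes "0 < r"
  obtains \<delta> where "0 < \<delta>"
    "\<And>h. h \<in> borel_measurable M \<Longrightarrow> integrable M (\<lambda>x. (h x)\<^sup>2) \<Longrightarrow> sq_integral M h < \<delta>
       \<Longrightarrow> (\<integral>x. \<bar>h x\<bar> \<partial>M) < r"
proof
  define m where "m = measure M (space M)"
  define e where "e = r / (2 * (m + 1))"
  have "0 \<le> m" by (simp add: m_def)
  hence e: "0 < e" "e * m < r / 2" using assms by (auto simp: e_def field_simps)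
  show "0 < e * r / 2" using e assms by simp
  fix h :: "'a \<Rightarrow> real"
  assume h: "h \<in> borel_measurable M" "integrable M (\<lambda>x. (h x)\<^sup>2)" "sq_integral M h < e * r / 2"
  have pointwise: "\<bar>t\<bar> \<le> e + t\<^sup>2 / e" for t :: real
  proof (cases "\<bar>t\<bar> \<le> e")
    case False
    hence "\<bar>t\<bar> * e \<le> \<bar>t\<bar> * \<bar>t\<bar>" by (intro mult_left_mono) auto
    hence "\<bar>t\<bar> \<le> t\<^sup>2 / e" using e by (simp add: field_simps power2_eq_square abs_mult_self_eq)
    thus ?thesis using e by simp
  next
    case True
    moreover have "0 \<le> t\<^sup>2 / e" using e by simp
    ultimately show ?thesis by linarith
  qed
  have "integrable M h" using h(1,2) by (rule square_integrable_imp_integrable)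
  hence "(\<integral>x. \<bar>h x\<bar> \<partial>M) \<le> (\<integral>x. e + (h x)\<^sup>2 / e \<partial>M)"
    using h(2) pointwise by (intro integral_mono) auto
  also have "\<dots> = e * m + sq_integral M h / e"
    using h(2) by (simp add: sq_integral_def m_def)
  also have "\<dots> < r"
  proof -
    have "sq_integral M h / e < r / 2" using e(1) h(3) by (simp add: pos_divide_less_eq mult.commute)
    thus ?thesis using e(2) by linarith
  qed
  finally show "(\<integral>x. \<bar>h x\<bar> \<partial>M) < r" .
qed

lemma Phi_integrable: "\<phi> \<in> Phi M \<Longrightarrow> integrable M \<phi>"
  by (intro integrable_const_bound[where B=1]) (auto simp: Phi_abs_le)

lemma integrable_square_Phi_diff:
  "\<phi> \<in> Phi M \<Longrightarrow> \<psi> \<in> Phi M \<Longrightarrow> integrable M (\<lambda>x. (\<phi> x - \<psi> x)\<^sup>2)"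
  by (intro integrable_square_bounded[where B=1] Phi_abs_diff_le) auto

lemma Phi_ae_limit_if_L2_Cauchy:
  fixes \<psi> :: "nat \<Rightarrow> 'a \<Rightarrow> real"
  assumes \<psi>: "\<And>n. \<psi> n \<in> Phi M"
    and Cauchy: "\<And>e. 0 < e \<Longrightarrow> \<exists>N. \<forall>i\<ge>N. \<forall>j\<ge>N. sq_integral M (\<lambda>x. \<psi> i x - \<psi> j x) < e"
  obtains r \<phi> where "strict_mono r" "\<phi> \<in> Phi M" "AE x in M. (\<lambda>n. \<psi> (r n) x) \<longlonglongrightarrow> \<phi> x"
proof -
  have L1_Cauchy: "\<exists>N. \<forall>i\<ge>N. \<forall>j\<ge>N. (LINT x|M. norm (\<psi> i x - \<psi> j x)) < e" if e: "0 < e" for e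
  proof -
    obtain \<delta> where \<delta>: "0 < \<delta>" "\<And>h. h \<in> borel_measurable M \<Longrightarrow> integrable M (\<lambda>x. (h x)\<^sup>2)
        \<Longrightarrow> sq_integral M h < \<delta> \<Longrightarrow> (\<integral>x. \<bar>h x\<bar> \<partial>M) < e"
      using abs_integral_small_if_sq_integral_small[OF e] by blast
    obtain N where "\<forall>i\<ge>N. \<forall>j\<ge>N. sq_integral M (\<lambda>x. \<psi> i x - \<psi> j x) < \<delta>"
      using Cauchy[OF \<delta>(1)] by blast
    hence "(LINT x|M. norm (\<psi> i x - \<psi> j x)) < e" if "N \<le> i" "N \<le> j" for i j
      using that \<psi>[of i] \<psi>[of j] \<delta>(2)[of "\<lambda>x. \<psi> i x - \<psi> j x"] integrable_square_Phi_diff by auto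
    thus ?thesis by blast
  qed
  obtain r where r: "strict_mono r" "AE x in M. Cauchy (\<lambda>n. \<psi> (r n) x)"
    using cauchy_L1_AE_cauchy_subseq[where s=\<psi>, OF Phi_integrable[OF \<psi>] L1_Cauchy] by blast
  \<comment> \<open>clipping to \<open>[0, 1]\<close> changes nothing where the limit exists, and makes the limit a test everywhere\<close>
  define \<phi> where "\<phi> x = max 0 (min 1 (lim (\<lambda>n. \<psi> (r n) x)))" for x
  have [measurable]: "\<psi> n \<in> borel_measurable M" for n using \<psi> by measurable
  have "\<phi> \<in> borel_measurable M" unfolding \<phi>_def by measurable
  hence \<phi>: "\<phi> \<in> Phi M" by (simp add: Phi_def \<phi>_def)
  have "AE x in M. (\<lambda>n. \<psi> (r n) x) \<longlonglongrightarrow> \<phi> x"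
    using r(2)
  proof (rule AE_mp, intro AE_I2 impI)
    fix x assume x: "x \<in> space M" and "Cauchy (\<lambda>n. \<psi> (r n) x)"
    hence lim: "(\<lambda>n. \<psi> (r n) x) \<longlonglongrightarrow> lim (\<lambda>n. \<psi> (r n) x)"
      using Cauchy_convergent convergent_LIMSEQ_iff by blast
    have "0 \<le> lim (\<lambda>n. \<psi> (r n) x)" "lim (\<lambda>n. \<psi> (r n) x) \<le> 1"
      using Phi_bounds[OF \<psi> x] by (auto intro: LIMSEQ_le_const[OF lim] LIMSEQ_le_const2[OF lim])
    thus "(\<lambda>n. \<psi> (r n) x) \<longlonglongrightarrow> \<phi> x" using lim by (simp add: \<phi>_def)
  qed
  with r(1) \<phi> show ?thesis by (rule that)
qed

lemma ae_limit_if_L2_close: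
  fixes u v :: "nat \<Rightarrow> 'a \<Rightarrow> real"
  assumes u: "\<And>n. u n \<in> Phi M" and v: "\<And>n. v n \<in> Phi M"
    and close: "(\<lambda>n. sq_integral M (\<lambda>x. u n x - v n x)) \<longlonglongrightarrow> 0"
    and lim: "AE x in M. (\<lambda>n. v n x) \<longlonglongrightarrow> \<phi> x"
  obtains s where "strict_mono s" "AE x in M. (\<lambda>n. u (s n) x) \<longlonglongrightarrow> \<phi> x"
proof -
  have L1: "(\<lambda>n. LINT x|M. norm (u n x - v n x)) \<longlonglongrightarrow> 0"
  proof (rule order_tendstoI)
    fix a :: real assume "0 < a"
    then obtain \<delta> where \<delta>: "0 < \<delta>" "\<And>h. h \<in> borel_measurable M \<Longrightarrow> integrable M (\<lambda>x. (h x)\<^sup>2)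
        \<Longrightarrow> sq_integral M h < \<delta> \<Longrightarrow> (\<integral>x. \<bar>h x\<bar> \<partial>M) < a"
      using abs_integral_small_if_sq_integral_small by blast
    from order_tendstoD(2)[OF close \<delta>(1)]
    show "\<forall>\<^sub>F n in sequentially. (LINT x|M. norm (u n x - v n x)) < a"
      by eventually_elim
        (use u v \<delta>(2) integrable_square_Phi_diff in \<open>auto\<close>)
  next
    fix a :: real assume "a < 0"
    have "a < (LINT x|M. norm (u n x - v n x))" for n
      using \<open>a < 0\<close> by (rule less_le_trans) (rule Bochner_Integration.integral_nonneg, simp)
    thus "\<forall>\<^sub>F n in sequentially. a < (LINT x|M. norm (u n x - v n x))"
      by (intro always_eventually allI)
  qed
  have "integrable M (\<lambda>x. u n x - v n x)" for n
    using u v by (intro Bochner_Integration.integrable_diff Phi_integrable)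
  then obtain s where s: "strict_mono s" "AE x in M. (\<lambda>n. u (s n) x - v (s n) x) \<longlonglongrightarrow> 0"
    using tendsto_L1_AE_subseq[OF _ L1] by blast
  have "AE x in M. (\<lambda>n. u (s n) x) \<longlonglongrightarrow> \<phi> x"
    using s(2) lim
  proof eventually_elim
    case (elim x)
    have "(\<lambda>n. v (s n) x) \<longlonglongrightarrow> \<phi> x"
      using LIMSEQ_subseq_LIMSEQ[OF elim(2) s(1)] by (simp add: o_def)
    from tendsto_add[OF elim(1) this] show ?case by simp
  qed
  with s(1) show ?thesis by (rule that)
qed

end

locale convex_directed_family = finite_measure M for M :: "'a measure" +
  fixes \<K> :: "('a \<Rightarrow> real) set set"
  assumes family_nonempty: "\<K> \<noteq> {}"
    and member_nonempty: "K \<in> \<K> \<Longrightarrow> K \<noteq> {}"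
    and member_Phi: "K \<in> \<K> \<Longrightarrow> K \<subseteq> Phi M"
    and member_convex: "K \<in> \<K> \<Longrightarrow> convex K"
    and member_ae_closed: "K \<in> \<K> \<Longrightarrow> ae_closed M K"
    and directed: "A \<in> \<K> \<Longrightarrow> B \<in> \<K> \<Longrightarrow> \<exists>C\<in>\<K>. C \<subseteq> A \<inter> B"
begin

definition min_sq :: "('a \<Rightarrow> real) set \<Rightarrow> real" where
  "min_sq K = Inf (sq_integral M ` K)"

definition sup_min_sq :: real where
  "sup_min_sq = Sup (min_sq ` \<K>)"

lemma min_sq_le: "\<phi> \<in> K \<Longrightarrow> min_sq K \<le> sq_integral M \<phi>"
  unfolding min_sq_def by (rule cInf_lower) (auto intro: bdd_belowI[of _ 0] sq_integral_nonneg)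

lemma min_sq_approx: "K \<in> \<K> \<Longrightarrow> 0 < e \<Longrightarrow> \<exists>\<phi>\<in>K. sq_integral M \<phi> < min_sq K + e"
  using cInf_lessD[of "sq_integral M ` K" "min_sq K + e"] member_nonempty
  unfolding min_sq_def by auto

lemma min_sq_le_sup: "K \<in> \<K> \<Longrightarrow> min_sq K \<le> sup_min_sq"
proof -
  have "min_sq K \<le> measure M (space M)" if "K \<in> \<K>" for K
    using member_nonempty[OF that] member_Phi[OF that] min_sq_le sq_integral_Phi_le
    by (meson equals0I order_trans subsetD)
  thus "K \<in> \<K> \<Longrightarrow> min_sq K \<le> sup_min_sq"
    unfolding sup_min_sq_def by (intro cSup_upper bdd_aboveI2) auto
qed

lemma min_sq_antimono: "C \<in> \<K> \<Longrightarrow> C \<subseteq> K \<Longrightarrow> min_sq K \<le> min_sq C"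
  unfolding min_sq_def using member_nonempty
  by (intro cInf_superset_mono) (auto intro: bdd_belowI[of _ 0] sq_integral_nonneg)

lemma minimizing_chain_exists:
  obtains Ks where "\<And>n. Ks n \<in> \<K>" "\<And>n. Ks (Suc n) \<subseteq> Ks n"
    "\<And>n. sup_min_sq - inverse (real (Suc n)) \<le> min_sq (Ks n)"
proof -
  have "\<exists>K\<in>\<K>. sup_min_sq - inverse (real (Suc n)) < min_sq K" for n
    using less_cSupD[of "min_sq ` \<K>"] family_nonempty unfolding sup_min_sq_def by auto
  then obtain Js where Js: "\<And>n. Js n \<in> \<K>" "\<And>n. sup_min_sq - inverse (real (Suc n)) < min_sq (Js n)"
    by metis
  obtain meet where meet: "\<And>A B. A \<in> \<K> \<Longrightarrow> B \<in> \<K> \<Longrightarrow> meet A B \<in> \<K> \<and> meet A B \<subseteq> A \<inter> B"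
    using directed by metis
  define Ks where "Ks = rec_nat (Js 0) (\<lambda>n K. meet K (Js (Suc n)))"
  have Ks: "Ks n \<in> \<K> \<and> Ks n \<subseteq> Js n" for n
    by (induction n) (auto simp: Ks_def Js(1) dest: meet[OF _ Js(1)])
  show ?thesis
  proof
    show "Ks n \<in> \<K>" for n using Ks by blast
    show "Ks (Suc n) \<subseteq> Ks n" for n using meet[OF _ Js(1)] Ks by (simp add: Ks_def)
    show "sup_min_sq - inverse (real (Suc n)) \<le> min_sq (Ks n)" for n
      using Js(2)[of n] min_sq_antimono[of "Ks n" "Js n"] Ks by force
  qed
qed

context
  fixes Ks :: "nat \<Rightarrow> ('a \<Rightarrow> real) set"
  assumes chain_member: "\<And>n. Ks n \<in> \<K>" and chain_decreasing: "\<And>n. Ks (Suc n) \<subseteq> Ks n"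
    and chain_min_sq: "\<And>n. sup_min_sq - inverse (real (Suc n)) \<le> min_sq (Ks n)"
begin

lemma chain_antimono: "m \<le> n \<Longrightarrow> Ks n \<subseteq> Ks m"
  using chain_decreasing by (rule lift_Suc_antimono_le)

lemma chain_near_minimizers_close:
  assumes "u \<in> Ks n" "v \<in> Ks n"
    and "sq_integral M u \<le> sup_min_sq + inverse (real (Suc n))"
    and "sq_integral M v \<le> sup_min_sq + inverse (real (Suc n))"
  shows "sq_integral M (\<lambda>x. u x - v x) \<le> 8 * inverse (real (Suc n))"
  using sq_integral_diff_le[OF member_convex member_Phi assms(1,2) min_sq_le] chain_member[of n]
    chain_min_sq[of n] assms(3,4)
  by fastforce

lemma chain_near_minimizer_exists:
  assumes "K \<in> \<K>"
  shows "\<exists>u \<in> Ks n \<inter> K. sq_integral M u \<le> sup_min_sq + inverse (real (Suc n))"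
proof -
  obtain C where C: "C \<in> \<K>" "C \<subseteq> Ks n \<inter> K" using directed[OF chain_member assms] by blast
  then obtain u where "u \<in> C" "sq_integral M u < min_sq C + inverse (real (Suc n))"
    using min_sq_approx[of C "inverse (real (Suc n))"] by auto
  thus ?thesis using C min_sq_le_sup[OF C(1)] by force
qed

lemma chain_limit_exists:
  obtains \<psi> r \<phi> where "\<And>n. \<psi> n \<in> Ks n" "\<And>n. sq_integral M (\<psi> n) \<le> sup_min_sq + inverse (real (Suc n))"
    "strict_mono r" "\<phi> \<in> Phi M" "AE x in M. (\<lambda>n. \<psi> (r n) x) \<longlonglongrightarrow> \<phi> x"
proof -
  have "\<exists>u\<in>Ks n. sq_integral M u \<le> sup_min_sq + inverse (real (Suc n))" for n
    using chain_near_minimizer_exists[OF chain_member, of n n] by auto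
  then obtain \<psi> where \<psi>: "\<And>n. \<psi> n \<in> Ks n" "\<And>n. sq_integral M (\<psi> n) \<le> sup_min_sq + inverse (real (Suc n))"
    by metis
  have \<psi>_Phi: "\<psi> n \<in> Phi M" for n using \<psi>(1) member_Phi[OF chain_member] by blast
  have "\<exists>N. \<forall>i\<ge>N. \<forall>j\<ge>N. sq_integral M (\<lambda>x. \<psi> i x - \<psi> j x) < e" if e: "0 < e" for e
  proof -
    obtain N where "inverse (real (Suc N)) < e / 8" using reals_Archimedean[of "e / 8"] e by auto
    hence N: "8 * inverse (real (Suc N)) < e" by simp
    have ordered: "sq_integral M (\<lambda>x. \<psi> i x - \<psi> j x) \<le> 8 * inverse (real (Suc N))"
      if "N \<le> j" "j \<le> i" for i j
    proof -
      have "inverse (real (Suc i)) \<le> inverse (real (Suc N))" "inverse (real (Suc j)) \<le> inverse (real (Suc N))"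
        using that by (auto simp: field_simps)
      thus ?thesis
        using chain_near_minimizers_close[of "\<psi> i" N "\<psi> j"] \<psi> chain_antimono that
        by (meson order_trans subsetD add_left_mono le_trans)
    qed
    have "sq_integral M (\<lambda>x. \<psi> i x - \<psi> j x) < e" if "N \<le> i" "N \<le> j" for i j
    proof (cases "j \<le> i")
      case True thus ?thesis using ordered[of j i] that N by linarith
    next
      case False
      thus ?thesis using ordered[of i j] that N sq_integral_diff_commute[of M "\<psi> i" "\<psi> j"] by linarith
    qed
    thus ?thesis by blast
  qed
  then obtain r \<phi> where "strict_mono r" "\<phi> \<in> Phi M" "AE x in M. (\<lambda>n. \<psi> (r n) x) \<longlonglongrightarrow> \<phi> x"
    using Phi_ae_limit_if_L2_Cauchy[of \<psi>, OF \<psi>_Phi] by blast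
  with \<psi> show ?thesis by (rule that)
qed

end

theorem Inter_nonempty: "\<Inter>\<K> \<noteq> {}"
proof -
  obtain Ks where Ks: "\<And>n. Ks n \<in> \<K>" "\<And>n. Ks (Suc n) \<subseteq> Ks n"
    "\<And>n. sup_min_sq - inverse (real (Suc n)) \<le> min_sq (Ks n)"
    by (rule minimizing_chain_exists) (rule that)
  obtain \<psi> r \<phi> where \<psi>: "\<And>n. \<psi> n \<in> Ks n" "\<And>n. sq_integral M (\<psi> n) \<le> sup_min_sq + inverse (real (Suc n))"
    and r: "strict_mono r" and \<phi>: "\<phi> \<in> Phi M" "AE x in M. (\<lambda>n. \<psi> (r n) x) \<longlonglongrightarrow> \<phi> x"
    by (rule chain_limit_exists[OF Ks]) (rule that)
  have "\<phi> \<in> K" if K: "K \<in> \<K>" for K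
  proof -
    obtain u where u: "\<And>n. u n \<in> Ks n \<inter> K" "\<And>n. sq_integral M (u n) \<le> sup_min_sq + inverse (real (Suc n))"
      using chain_near_minimizer_exists[OF Ks K] by metis
    have Phi: "u n \<in> Phi M" "\<psi> n \<in> Phi M" for n using u(1) \<psi>(1) member_Phi[OF Ks(1)] by blast+
    have bound: "sq_integral M (\<lambda>x. u (r n) x - \<psi> (r n) x) \<le> 8 * inverse (real (Suc n))" for n
    proof -
      have "sq_integral M (\<lambda>x. u (r n) x - \<psi> (r n) x) \<le> 8 * inverse (real (Suc (r n)))"
        by (rule chain_near_minimizers_close[OF Ks IntD1[OF u(1)] \<psi>(1) u(2) \<psi>(2)])
      also have "\<dots> \<le> 8 * inverse (real (Suc n))"
        using seq_suble[OF r, of n] by (simp add: field_simps)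
      finally show ?thesis .
    qed
    have close: "(\<lambda>n. sq_integral M (\<lambda>x. u (r n) x - \<psi> (r n) x)) \<longlonglongrightarrow> 0"
    proof (rule tendsto_sandwich)
      show "\<forall>\<^sub>F n in sequentially. 0 \<le> sq_integral M (\<lambda>x. u (r n) x - \<psi> (r n) x)"
        by (simp add: sq_integral_nonneg)
      show "\<forall>\<^sub>F n in sequentially. sq_integral M (\<lambda>x. u (r n) x - \<psi> (r n) x) \<le> 8 * inverse (real (Suc n))"
        using bound by simp
      show "(\<lambda>n. 8 * inverse (real (Suc n))) \<longlonglongrightarrow> 0"
        using tendsto_mult[OF tendsto_const LIMSEQ_inverse_real_of_nat, of 8] by simp
    qed simp
    obtain s where "strict_mono s" "AE x in M. (\<lambda>n. u (r (s n)) x) \<longlonglongrightarrow> \<phi> x"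
      by (rule ae_limit_if_L2_close[OF Phi(1) Phi(2) close \<phi>(2)])
    thus "\<phi> \<in> K"
      using ae_closedD[OF member_ae_closed[OF K], of "\<lambda>n. u (r (s n))"] u(1) \<phi>(1) by blast
  qed
  thus ?thesis by blast
qed

end

context sigma_finite_measure
begin

lemma directed_Inter_Phi_nonempty:
  assumes "\<K> \<noteq> {}"
    and "\<And>K. K \<in> \<K> \<Longrightarrow> K \<noteq> {} \<and> K \<subseteq> Phi M \<and> convex K \<and> ae_closed M K"
    and "\<And>A B. A \<in> \<K> \<Longrightarrow> B \<in> \<K> \<Longrightarrow> \<exists>C\<in>\<K>. C \<subseteq> A \<inter> B"
  shows "\<Inter>\<K> \<noteq> {}"
proof -
  \<comment> \<open>pass to an equivalent finite measure; tests and a.e. convergence only depend on the null sets\<close>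
  obtain w :: "'a \<Rightarrow> real" where w: "w \<in> borel_measurable M" "\<And>x. 0 < w x" "integrable M w"
    using obtain_positive_integrable_function by metis
  define \<mu> where "\<mu> = density M (\<lambda>x. ennreal (w x))"
  have "emeasure \<mu> (space \<mu>) = (\<integral>\<^sup>+x. ennreal (w x) \<partial>M)"
    unfolding \<mu>_def using w(1) by (simp add: emeasure_density)
  hence "finite_measure \<mu>" using integrableD(2)[OF w(3)] by (intro finite_measureI) simp
  moreover have Phi_\<mu>: "Phi \<mu> = Phi M"
    unfolding Phi_def \<mu>_def by (simp cong: measurable_cong_sets)
  moreover have "AE x in M. P x" if "AE x in \<mu>. P x" for P
  proof -
    have "(\<lambda>x. ennreal (w x)) \<in> borel_measurable M" using w(1) by measurable
    thus ?thesis using that w(2) unfolding \<mu>_def by (simp add: AE_density)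
  qed
  hence "ae_closed \<mu> K" if "ae_closed M K" for K
    using that unfolding ae_closed_def Phi_\<mu> by blast
  ultimately have "convex_directed_family \<mu> \<K>"
    using assms by (intro convex_directed_family.intro convex_directed_family_axioms.intro) (auto simp: Phi_\<mu>)
  then interpret convex_directed_family \<mu> \<K> .
  show ?thesis by (rule Inter_nonempty)
qed

lemma Phi_Sup_attained:
  fixes J :: "('a \<Rightarrow> real) \<Rightarrow> real"
  assumes C: "C \<noteq> {}" "C \<subseteq> Phi M" and bdd: "bdd_above (J ` C)"
    and convex: "\<And>v. convex {\<phi> \<in> C. v \<le> J \<phi>}" and closed: "\<And>v. ae_closed M {\<phi> \<in> C. v \<le> J \<phi>}"
  shows "\<exists>\<phi>\<in>C. \<forall>\<psi>\<in>C. J \<psi> \<le> J \<phi>"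
proof -
  define K where "K n = {\<phi> \<in> C. Sup (J ` C) - inverse (real (Suc n)) \<le> J \<phi>}" for n
  have "\<Inter>(range K) \<noteq> {}"
  proof (rule directed_Inter_Phi_nonempty)
    fix K' assume "K' \<in> range K"
    then obtain n where n: "K' = K n" by blast
    have "K n \<noteq> {}"
      using less_cSupD[of "J ` C" "Sup (J ` C) - inverse (real (Suc n))"] C(1)
      unfolding K_def by (auto intro: less_imp_le)
    moreover have "K n \<subseteq> Phi M" "convex (K n)" "ae_closed M (K n)"
      using C(2) convex closed unfolding K_def by auto
    ultimately show "K' \<noteq> {} \<and> K' \<subseteq> Phi M \<and> convex K' \<and> ae_closed M K'" using n by blast
  next
    have antimono: "K n \<subseteq> K m" if "m \<le> n" for m n
    proof
      fix \<phi> assume "\<phi> \<in> K n"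
      moreover have "inverse (real (Suc n)) \<le> inverse (real (Suc m))" using that by (simp add: field_simps)
      ultimately show "\<phi> \<in> K m" unfolding K_def using order_trans[OF diff_left_mono] by blast
    qed
    fix A B assume "A \<in> range K" "B \<in> range K"
    then obtain i j where "A = K i" "B = K j" by blast
    thus "\<exists>C\<in>range K. C \<subseteq> A \<inter> B" using antimono[of i "max i j"] antimono[of j "max i j"] by auto
  qed simp
  then obtain \<phi> where \<phi>: "\<phi> \<in> C" "\<And>n. Sup (J ` C) - inverse (real (Suc n)) \<le> J \<phi>"
    unfolding K_def by blast
  have "(\<lambda>n. Sup (J ` C) - inverse (real (Suc n))) \<longlonglongrightarrow> Sup (J ` C)"
    using tendsto_diff[OF tendsto_const LIMSEQ_inverse_real_of_nat, of "Sup (J ` C)"] by simp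
  hence "Sup (J ` C) \<le> J \<phi>" by (rule LIMSEQ_le_const2) (use \<phi>(2) in auto)
  thus ?thesis using \<phi>(1) cSUP_upper[OF _ bdd] by (meson order_trans)
qed

end

section \<open>Mixtures of densities\<close>

lemma space_finite_measures_on: "L \<in> finite_measures_on A \<Longrightarrow> space L = A"
  using sets_eq_imp_space_eq[of L "restrict_space borel A"]
  by (simp add: finite_measures_on_def space_restrict_space)

lemma prob_distributions_on_subset: "prob_distributions_on A \<subseteq> finite_measures_on A"
  unfolding prob_distributions_on_def finite_measures_on_def prob_space_def by blast

lemma scale_measure_finite_measures_on:
  assumes L: "L \<in> finite_measures_on A"
  shows "scale_measure (ennreal r) L \<in> finite_measures_on A"
proof -
  interpret finite_measure L using L by (simp add: finite_measures_on_def)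
  have "emeasure (scale_measure (ennreal r) L) (space L) \<noteq> \<infinity>"
    using emeasure_finite[of "space L"] by (simp add: ennreal_mult_eq_top_iff)
  thus ?thesis using L by (auto simp: finite_measures_on_def space_scale_measure intro: finite_measureI)
qed

lemma normalize_finite_measures_on:
  assumes L: "L \<in> finite_measures_on A" and pos: "0 < measure L (space L)"
  shows "scale_measure (ennreal (1 / measure L (space L))) L \<in> prob_distributions_on A"
proof -
  interpret finite_measure L using L by (simp add: finite_measures_on_def)
  have "emeasure (scale_measure (ennreal (1 / measure L (space L))) L) (space L) = 1"
    using pos by (simp add: emeasure_eq_measure flip: ennreal_mult)
  hence "prob_space (scale_measure (ennreal (1 / measure L (space L))) L)"
    by (intro prob_spaceI) (simp add: space_scale_measure)
  thus ?thesis using L by (simp add: prob_distributions_on_def finite_measures_on_def)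
qed

lemma integral_scale_measure:
  fixes g :: "'a \<Rightarrow> real"
  assumes "0 \<le> r"
  shows "(\<integral>x. g x \<partial>scale_measure (ennreal r) M) = r * (\<integral>x. g x \<partial>M)"
proof -
  have density: "scale_measure (ennreal r) M = density M (\<lambda>_. ennreal r)"
    by (rule measure_eqI) (auto simp: emeasure_density nn_integral_cmult_indicator)
  show ?thesis
  proof (cases "g \<in> borel_measurable M")
    case True
    thus ?thesis using assms unfolding density by (subst integral_density) auto
  next
    case False
    hence "\<not> integrable M g" "\<not> integrable (scale_measure (ennreal r) M) g"
      by (auto simp: measurable_cong_sets[OF sets_scale_measure refl])
    thus ?thesis by (simp add: not_integrable_integral_eq)
  qed
qed

lemma mix_scale_measure: "0 \<le> r \<Longrightarrow> mix (scale_measure (ennreal r) L) f y = r * mix L f y"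
  unfolding mix_def by (rule integral_scale_measure)

lemma finite_point_masses_exist:
  fixes A :: "'t::topological_space set" and w :: "'t \<Rightarrow> real"
  assumes F: "finite F" "F \<subseteq> A" and w: "\<And>\<theta>. \<theta> \<in> F \<Longrightarrow> 0 \<le> w \<theta>"
  obtains L where "L \<in> finite_measures_on A"
    "\<And>h. h \<in> borel_measurable L \<Longrightarrow> (\<integral>\<theta>. h \<theta> \<partial>L) = (\<Sum>\<theta>\<in>F. w \<theta> * h \<theta>)"
proof
  define D where "D = density (count_space F) (\<lambda>\<theta>. ennreal (w \<theta>))"
  define L where "L = distr D (restrict_space borel A) (\<lambda>\<theta>. \<theta>)"
  have sets_D: "sets D = sets (count_space F)" by (simp add: D_def)
  have id: "(\<lambda>\<theta>. \<theta>) \<in> D \<rightarrow>\<^sub>M restrict_space borel A"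
    unfolding measurable_cong_sets[OF sets_D refl] using F(2) by (auto simp: space_restrict_space)
  have "emeasure D (space D) = ennreal (\<Sum>\<theta>\<in>F. w \<theta>)"
    using F w by (simp add: D_def emeasure_density nn_integral_count_space_finite sum_ennreal)
  hence "finite_measure D" by (intro finite_measureI) simp
  hence "finite_measure L" unfolding L_def using id by (rule finite_measure.finite_measure_distr)
  thus "L \<in> finite_measures_on A" by (simp add: finite_measures_on_def L_def)
  fix h :: "'t \<Rightarrow> real" assume "h \<in> borel_measurable L"
  hence "h \<in> borel_measurable (restrict_space borel A)" by (simp add: L_def cong: measurable_cong_sets)
  hence "(\<integral>\<theta>. h \<theta> \<partial>L) = (\<integral>\<theta>. h \<theta> \<partial>D)" unfolding L_def using id by (intro integral_distr)
  also have "\<dots> = (\<integral>\<theta>. w \<theta> *\<^sub>R h \<theta> \<partial>count_space F)"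
    unfolding D_def using w by (intro integral_density) auto
  finally show "(\<integral>\<theta>. h \<theta> \<partial>L) = (\<Sum>\<theta>\<in>F. w \<theta> * h \<theta>)"
    using F(1) by (simp add: lebesgue_integral_count_space_finite)
qed

locale density_family =
  fixes N :: "'y measure" and f :: "'t::topological_space \<Rightarrow> 'y \<Rightarrow> real" and Theta :: "'t set"
  assumes sigma_finite: "sigma_finite_measure N"
    and joint_measurable:
      "(\<lambda>p. f (fst p) (snd p)) \<in> borel_measurable (restrict_space (borel \<Otimes>\<^sub>M N) (Theta \<times> space N))"
    and density_nonneg: "\<And>\<theta> y. \<theta> \<in> Theta \<Longrightarrow> y \<in> space N \<Longrightarrow> 0 \<le> f \<theta> y"
    and density_total: "\<And>\<theta>. \<theta> \<in> Theta \<Longrightarrow> (\<integral>\<^sup>+ y. ennreal (f \<theta> y) \<partial>N) = 1"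
begin

lemma density_measurable: "\<theta> \<in> Theta \<Longrightarrow> f \<theta> \<in> borel_measurable N"
  using measurable_compose[OF measurable_restrict_space2[of "\<lambda>y. (\<theta>, y)"] joint_measurable]
  by auto

lemma density_integrable: "\<theta> \<in> Theta \<Longrightarrow> integrable N (f \<theta>)"
  using density_measurable density_total density_nonneg
  by (intro integrableI_nonneg) (auto intro: AE_I2)

lemma integral_density: "\<theta> \<in> Theta \<Longrightarrow> (\<integral>y. f \<theta> y \<partial>N) = 1"
  using density_measurable density_total density_nonneg
  by (subst integral_eq_nn_integral) (auto intro: AE_I2)

context
  fixes L :: "'t measure" and A :: "'t set"
  assumes L: "L \<in> finite_measures_on A" and A: "A \<subseteq> Theta"
begin

lemma mixing_finite_measure: "finite_measure L"
  using L by (simp add: finite_measures_on_def)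

lemma mixing_space: "space L \<subseteq> Theta"
  using space_finite_measures_on[OF L] A by simp

lemma joint_measurable_mixing: "(\<lambda>p. f (fst p) (snd p)) \<in> borel_measurable (L \<Otimes>\<^sub>M N)"
proof -
  have "(\<lambda>p. p) \<in> restrict_space borel A \<Otimes>\<^sub>M N \<rightarrow>\<^sub>M restrict_space (borel \<Otimes>\<^sub>M N) (Theta \<times> space N)"
  proof (rule measurable_restrict_space2)
    show "(\<lambda>p. p) \<in> space (restrict_space borel A \<Otimes>\<^sub>M N) \<rightarrow> Theta \<times> space N"
      using A by (auto simp: space_pair_measure space_restrict_space)
    show "(\<lambda>p. p) \<in> restrict_space borel A \<Otimes>\<^sub>M N \<rightarrow>\<^sub>M borel \<Otimes>\<^sub>M N"
    proof (rule measurable_pair_measureI)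
      fix X :: "'t set" and Y assume XY: "X \<in> sets borel" "Y \<in> sets N"
      have "(\<lambda>p. p) -` (X \<times> Y) \<inter> space (restrict_space borel A \<Otimes>\<^sub>M N) = (X \<inter> A) \<times> Y"
        using sets.sets_into_space[OF XY(2)] by (auto simp: space_pair_measure space_restrict_space)
      moreover have "X \<inter> A \<in> sets (restrict_space borel A)"
        using XY(1) by (auto simp: sets_restrict_space)
      ultimately show "(\<lambda>p. p) -` (X \<times> Y) \<inter> space (restrict_space borel A \<Otimes>\<^sub>M N) \<in> sets (restrict_space borel A \<Otimes>\<^sub>M N)"
        using XY(2) by auto
    qed (auto simp: space_pair_measure space_restrict_space)
  qed
  from measurable_compose[OF this joint_measurable]
  show ?thesis
    using L by (simp add: finite_measures_on_def cong: measurable_cong_sets sets_pair_measure_cong)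
qed

lemma mixing_pair_sigma_finite: "pair_sigma_finite L N"
proof -
  interpret L: finite_measure L by (rule mixing_finite_measure)
  interpret N: sigma_finite_measure N by (rule sigma_finite)
  show ?thesis by unfold_locales
qed

lemma integrable_pair_mult_density:
  assumes \<phi>: "\<phi> \<in> borel_measurable N" "\<And>y. y \<in> space N \<Longrightarrow> \<bar>\<phi> y\<bar> \<le> B" and B: "0 \<le> B"
  shows "integrable (L \<Otimes>\<^sub>M N) (\<lambda>(\<theta>, y). \<phi> y * f \<theta> y)"
proof (rule integrableI_bounded)
  interpret L: finite_measure L by (rule mixing_finite_measure)
  interpret N: sigma_finite_measure N by (rule sigma_finite)
  note [measurable] = joint_measurable_mixing \<phi>(1)
  show "(\<lambda>(\<theta>, y). \<phi> y * f \<theta> y) \<in> borel_measurable (L \<Otimes>\<^sub>M N)"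
    unfolding case_prod_beta by measurable
  have "(\<integral>\<^sup>+p. ennreal (norm (case p of (\<theta>, y) \<Rightarrow> \<phi> y * f \<theta> y)) \<partial>(L \<Otimes>\<^sub>M N))
      \<le> (\<integral>\<^sup>+p. ennreal (B * f (fst p) (snd p)) \<partial>(L \<Otimes>\<^sub>M N))"
  proof (rule nn_integral_mono)
    fix p assume "p \<in> space (L \<Otimes>\<^sub>M N)"
    hence "fst p \<in> Theta" "snd p \<in> space N" using mixing_space by (auto simp: space_pair_measure)
    thus "ennreal (norm (case p of (\<theta>, y) \<Rightarrow> \<phi> y * f \<theta> y)) \<le> ennreal (B * f (fst p) (snd p))"
      using \<phi>(2) density_nonneg
      by (auto simp: abs_mult case_prod_beta intro!: ennreal_leI mult_right_mono)
  qed
  also have "\<dots> = (\<integral>\<^sup>+\<theta>. (\<integral>\<^sup>+y. ennreal B * ennreal (f \<theta> y) \<partial>N) \<partial>L)"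
    using B density_nonneg subsetD[OF mixing_space]
    by (subst N.nn_integral_fst[symmetric]) (auto simp: ennreal_mult intro!: nn_integral_cong)
  also have "\<dots> = (\<integral>\<^sup>+\<theta>. ennreal B \<partial>L)"
    using mixing_space density_measurable density_total
    by (intro nn_integral_cong) (auto simp: nn_integral_cmult)
  also have "\<dots> < \<infinity>"
    using L.emeasure_finite[of "space L"] by (simp add: ennreal_mult_eq_top_iff less_top[symmetric])
  finally show "(\<integral>\<^sup>+p. ennreal (norm (case p of (\<theta>, y) \<Rightarrow> \<phi> y * f \<theta> y)) \<partial>(L \<Otimes>\<^sub>M N)) < \<infinity>" .
qed

lemma integral_mix:
  assumes \<phi>: "\<phi> \<in> borel_measurable N" "\<And>y. y \<in> space N \<Longrightarrow> \<bar>\<phi> y\<bar> \<le> B" and B: "0 \<le> B"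
  shows "(\<integral>\<theta>. (\<integral>y. \<phi> y * f \<theta> y \<partial>N) \<partial>L) = (\<integral>y. \<phi> y * mix L f y \<partial>N)"
proof -
  interpret pair_sigma_finite L N by (rule mixing_pair_sigma_finite)
  show ?thesis
    using Fubini_integral[OF integrable_pair_mult_density[OF assms]] by (simp add: mix_def)
qed

lemma mix_measurable: "mix L f \<in> borel_measurable N"
proof -
  interpret L: finite_measure L by (rule mixing_finite_measure)
  have "(\<lambda>(y, \<theta>). f \<theta> y) \<in> borel_measurable (N \<Otimes>\<^sub>M L)"
    using measurable_comp[OF measurable_pair_swap' joint_measurable_mixing]
    by (simp add: o_def case_prod_beta)
  thus ?thesis unfolding mix_def by (rule L.borel_measurable_lebesgue_integral)
qed

lemma mix_nonneg: "y \<in> space N \<Longrightarrow> 0 \<le> mix L f y"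
  unfolding mix_def using mixing_space density_nonneg
  by (intro Bochner_Integration.integral_nonneg) auto

lemma mix_integrable: "integrable N (mix L f)"
proof -
  interpret pair_sigma_finite L N by (rule mixing_pair_sigma_finite)
  show ?thesis
    using integrable_snd[OF integrable_pair_mult_density[of "\<lambda>_. 1" 1]] unfolding mix_def[abs_def] by simp
qed

lemma integral_mix_total: "(\<integral>y. mix L f y \<partial>N) = measure L (space L)"
proof -
  have "(\<integral>y. 1 * mix L f y \<partial>N) = (\<integral>\<theta>. (\<integral>y. 1 * f \<theta> y \<partial>N) \<partial>L)"
    by (rule integral_mix[symmetric]) auto
  also have "\<dots> = (\<integral>\<theta>. 1 \<partial>L)"
    using mixing_space integral_density by (intro Bochner_Integration.integral_cong) auto
  finally show ?thesis by simp
qed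

lemma test_integral_measurable:
  "\<phi> \<in> borel_measurable N \<Longrightarrow> (\<lambda>\<theta>. \<integral>y. \<phi> y * f \<theta> y \<partial>N) \<in> borel_measurable L"
proof -
  interpret N: sigma_finite_measure N by (rule sigma_finite)
  assume [measurable]: "\<phi> \<in> borel_measurable N"
  have [measurable]: "(\<lambda>p. f (fst p) (snd p)) \<in> borel_measurable (L \<Otimes>\<^sub>M N)"
    by (rule joint_measurable_mixing)
  have "(\<lambda>(\<theta>, y). \<phi> y * f \<theta> y) \<in> borel_measurable (L \<Otimes>\<^sub>M N)"
    unfolding case_prod_beta by measurable
  thus ?thesis by (rule N.borel_measurable_lebesgue_integral)
qed

end

lemma abs_test_integral_le:
  "\<theta> \<in> Theta \<Longrightarrow> \<phi> \<in> Phi N \<Longrightarrow> \<bar>\<integral>y. \<phi> y * f \<theta> y \<partial>N\<bar> \<le> 1"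
  using abs_integral_bounded_mult_le[OF density_integrable density_nonneg Phi_measurable Phi_abs_le]
  by (simp add: integral_density)

lemma convex_Phi_alpha: "T \<subseteq> Theta \<Longrightarrow> convex (Phi_alpha N f T \<alpha>)"
proof (rule convexI)
  fix \<phi> \<psi> and u v :: real
  assume T: "T \<subseteq> Theta" and mem: "\<phi> \<in> Phi_alpha N f T \<alpha>" "\<psi> \<in> Phi_alpha N f T \<alpha>"
    and uv: "0 \<le> u" "0 \<le> v" "u + v = 1"
  have \<phi>\<psi>: "\<phi> \<in> Phi N" "\<psi> \<in> Phi N" using mem by (auto simp: Phi_alpha_def)
  have "(\<integral>y. (u *\<^sub>R \<phi> + v *\<^sub>R \<psi>) y * f \<theta> y \<partial>N) \<le> \<alpha>" if "\<theta> \<in> T" for \<theta>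
  proof -
    have "(\<integral>y. (u *\<^sub>R \<phi> + v *\<^sub>R \<psi>) y * f \<theta> y \<partial>N) = u * (\<integral>y. \<phi> y * f \<theta> y \<partial>N) + v * (\<integral>y. \<psi> y * f \<theta> y \<partial>N)"
      using that T by (intro integral_Phi_convex_comb density_integrable \<phi>\<psi>) auto
    also have "\<dots> \<le> u * \<alpha> + v * \<alpha>"
      using mem that uv by (intro add_mono mult_left_mono) (auto simp: Phi_alpha_def)
    finally show ?thesis using uv by (simp flip: distrib_right)
  qed
  thus "u *\<^sub>R \<phi> + v *\<^sub>R \<psi> \<in> Phi_alpha N f T \<alpha>"
    using convexD[OF convex_Phi \<phi>\<psi> uv] by (simp add: Phi_alpha_def)
qed

lemma ae_closed_Phi_alpha: "T \<subseteq> Theta \<Longrightarrow> ae_closed N (Phi_alpha N f T \<alpha>)"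
  unfolding ae_closed_def
proof (intro allI impI)
  fix s \<phi> assume T: "T \<subseteq> Theta" and s: "\<forall>n. s n \<in> Phi_alpha N f T \<alpha>" and \<phi>: "\<phi> \<in> Phi N"
    and lim: "AE y in N. (\<lambda>n. s n y) \<longlonglongrightarrow> \<phi> y"
  have "(\<integral>y. \<phi> y * f \<theta> y \<partial>N) \<le> \<alpha>" if "\<theta> \<in> T" for \<theta>
  proof (rule LIMSEQ_le_const2)
    show "(\<lambda>n. \<integral>y. s n y * f \<theta> y \<partial>N) \<longlonglongrightarrow> (\<integral>y. \<phi> y * f \<theta> y \<partial>N)"
    proof (rule tendsto_integral_Phi_mult)
      show "AE y in N. (\<lambda>n. s n y * f \<theta> y) \<longlonglongrightarrow> \<phi> y * f \<theta> y"
        using lim by eventually_elim (rule tendsto_mult_right)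
    qed (use s \<phi> that T density_integrable in \<open>auto simp: Phi_alpha_def\<close>)
  qed (use s that in \<open>auto simp: Phi_alpha_def\<close>)
  thus "\<phi> \<in> Phi_alpha N f T \<alpha>" using \<phi> by (simp add: Phi_alpha_def)
qed

end

section \<open>Neyman--Pearson tests\<close>

context
  fixes N :: "'y measure" and g h :: "'y \<Rightarrow> real"
  assumes g: "integrable N g" "\<And>y. y \<in> space N \<Longrightarrow> 0 \<le> g y"
    and h: "integrable N h" "\<And>y. y \<in> space N \<Longrightarrow> 0 \<le> h y"
begin

lemma NP_indicators_Phi:
  "(\<lambda>y. if c * h y < g y then 1 else 0) \<in> Phi N" "(\<lambda>y. if c * h y \<le> g y then 1 else 0) \<in> Phi N"
proof -
  have [measurable]: "g \<in> borel_measurable N" "h \<in> borel_measurable N" using g(1) h(1) by auto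
  show "(\<lambda>y. if c * h y < g y then 1 else 0) \<in> Phi N" by (rule Phi_indicator) measurable
  show "(\<lambda>y. if c * h y \<le> g y then 1 else 0) \<in> Phi N" by (rule Phi_indicator) measurable
qed

lemma NP_size_tendsto_from_above:
  assumes lim: "c' \<longlonglongrightarrow> c" and above: "\<And>n. c \<le> c' n"
  shows "(\<lambda>n. \<integral>y. (if c' n * h y < g y then 1 else 0) * h y \<partial>N)
    \<longlonglongrightarrow> (\<integral>y. (if c * h y < g y then 1 else 0) * h y \<partial>N)"
proof (rule tendsto_integral_Phi_mult[OF h(1)])
  have "(\<lambda>n. (if c' n * h y < g y then 1 else 0) * h y) \<longlonglongrightarrow> (if c * h y < g y then 1 else 0) * h y"
    if y: "y \<in> space N" for y
  proof (cases "c * h y < g y")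
    case True
    have "(\<lambda>n. c' n * h y) \<longlonglongrightarrow> c * h y" using lim by (rule tendsto_mult_right)
    hence "\<forall>\<^sub>F n in sequentially. c' n * h y < g y" using True by (rule order_tendstoD(2))
    thus ?thesis using True by (intro tendsto_eventually) (auto elim: eventually_mono)
  next
    case False
    hence "\<not> c' n * h y < g y" for n using mult_right_mono[OF above[of n] h(2)[OF y]] by linarith
    thus ?thesis using False by simp
  qed
  thus "AE y in N. (\<lambda>n. (if c' n * h y < g y then 1 else 0) * h y) \<longlonglongrightarrow> (if c * h y < g y then 1 else 0) * h y"
    by (rule AE_I2)
qed (rule NP_indicators_Phi)+

lemma NP_size_tendsto_from_below:
  assumes lim: "c' \<longlonglongrightarrow> c" and below: "\<And>n. c' n < c"
  shows "(\<lambda>n. \<integral>y. (if c' n * h y < g y then 1 else 0) * h y \<partial>N)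
    \<longlonglongrightarrow> (\<integral>y. (if c * h y \<le> g y then 1 else 0) * h y \<partial>N)"
proof (rule tendsto_integral_Phi_mult[OF h(1)])
  have "(\<lambda>n. (if c' n * h y < g y then 1 else 0) * h y) \<longlonglongrightarrow> (if c * h y \<le> g y then 1 else 0) * h y"
    if y: "y \<in> space N" for y
  proof (cases "0 < h y \<and> c * h y \<le> g y")
    case True
    hence "c' n * h y < g y" for n using mult_strict_right_mono[OF below[of n], of "h y"] by linarith
    thus ?thesis using True by simp
  next
    case False
    show ?thesis
    proof (cases "h y = 0")
      case False
      with \<open>\<not> (0 < h y \<and> c * h y \<le> g y)\<close> h(2)[OF y] have "g y < c * h y" by auto
      moreover have "(\<lambda>n. c' n * h y) \<longlonglongrightarrow> c * h y" using lim by (rule tendsto_mult_right)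
      ultimately have "\<forall>\<^sub>F n in sequentially. g y < c' n * h y" by (simp add: order_tendstoD(1))
      thus ?thesis using \<open>g y < c * h y\<close>
        by (intro tendsto_eventually) (auto elim: eventually_mono)
    qed simp
  qed
  thus "AE y in N. (\<lambda>n. (if c' n * h y < g y then 1 else 0) * h y) \<longlonglongrightarrow> (if c * h y \<le> g y then 1 else 0) * h y"
    by (rule AE_I2)
qed (rule NP_indicators_Phi)+

lemma NP_size_antimono:
  assumes "c \<le> c'"
  shows "(\<integral>y. (if c' * h y < g y then 1 else 0) * h y \<partial>N) \<le> (\<integral>y. (if c * h y < g y then 1 else 0) * h y \<partial>N)"
proof (rule integral_mono)
  show "(if c' * h y < g y then 1 else 0) * h y \<le> (if c * h y < g y then 1 else 0) * h y"
    if "y \<in> space N" for y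
    using mult_right_mono[OF assms h(2)[OF that]] h(2)[OF that] by auto
qed (use g h in \<open>auto intro: integrable_Phi_mult NP_indicators_Phi\<close>)

lemma NP_size_le:
  assumes "0 < c"
  shows "(\<integral>y. (if c * h y < g y then 1 else 0) * h y \<partial>N) \<le> (\<integral>y. g y \<partial>N) / c"
proof -
  have "(\<integral>y. (if c * h y < g y then 1 else 0) * h y \<partial>N) \<le> (\<integral>y. g y / c \<partial>N)"
  proof (rule integral_mono)
    show "(if c * h y < g y then 1 else 0) * h y \<le> g y / c" if "y \<in> space N" for y
      using assms g(2)[OF that] by (auto simp: field_simps)
  qed (use g h in \<open>auto intro: integrable_Phi_mult NP_indicators_Phi\<close>)
  thus ?thesis by simp
qed

lemma NP_critical_value_exists:
  assumes g1: "(\<integral>y. g y \<partial>N) = 1" and h1: "(\<integral>y. h y \<partial>N) = 1" and \<alpha>: "0 < \<alpha>" "\<alpha> \<le> 1"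
  shows "\<exists>cv\<ge>0. (\<integral>y. (if cv * h y < g y then 1 else 0) * h y \<partial>N) \<le> \<alpha>
    \<and> \<alpha> \<le> (\<integral>y. (if cv * h y \<le> g y then 1 else 0) * h y \<partial>N)"
proof -
  define G where "G c = (\<integral>y. (if c * h y < g y then 1 else 0) * h y \<partial>N)" for c
  define E where "E c = (\<integral>y. (if c * h y \<le> g y then 1 else 0) * h y \<partial>N)" for c
  define S where "S = {c. 0 \<le> c \<and> G c \<le> \<alpha>}"
  have "G (2 / \<alpha>) \<le> \<alpha>" using NP_size_le[of "2 / \<alpha>"] \<alpha> g1 by (simp add: G_def)
  hence S_mem: "2 / \<alpha> \<in> S" using \<alpha> by (simp add: S_def)
  hence "S \<noteq> {}" by blast
  have S_bdd: "bdd_below S" unfolding S_def by (rule bdd_belowI[of _ 0]) auto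
  define cv where "cv = Inf S"
  have "0 \<le> cv" unfolding cv_def using \<open>S \<noteq> {}\<close> by (rule cInf_greatest) (simp add: S_def)
  moreover have "G cv \<le> \<alpha>"
  proof (rule LIMSEQ_le_const2)
    show "(\<lambda>n. G (cv + inverse (real (Suc n)))) \<longlonglongrightarrow> G cv"
      unfolding G_def using tendsto_add[OF tendsto_const LIMSEQ_inverse_real_of_nat, of cv]
      by (intro NP_size_tendsto_from_above) auto
    have "G (cv + inverse (real (Suc n))) \<le> \<alpha>" for n
    proof -
      obtain c where "c \<in> S" "c < cv + inverse (real (Suc n))"
        using cInf_lessD[of S "cv + inverse (real (Suc n))"] S_mem by (auto simp: cv_def)
      hence "G (cv + inverse (real (Suc n))) \<le> G c"
        unfolding G_def by (intro NP_size_antimono) simp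
      thus ?thesis using \<open>c \<in> S\<close> by (simp add: S_def)
    qed
    thus "\<exists>N. \<forall>n\<ge>N. G (cv + inverse (real (Suc n))) \<le> \<alpha>" by blast
  qed
  moreover have "\<alpha> \<le> E cv"
  proof (cases "cv = 0")
    case True
    have "E 0 = 1" using g(2) h1 by (simp add: E_def cong: Bochner_Integration.integral_cong)
    thus ?thesis using True \<alpha> by simp
  next
    case False
    with \<open>0 \<le> cv\<close> have "0 < cv" by simp
    define c' where "c' n = cv - cv * inverse (real (Suc (Suc n)))" for n
    have c': "0 \<le> c' n" "c' n < cv" for n using \<open>0 < cv\<close> by (auto simp: c'_def field_simps)
    show ?thesis
    proof (rule LIMSEQ_le_const)
      have "c' \<longlonglongrightarrow> cv - cv * 0"
        unfolding c'_def using LIMSEQ_Suc[OF LIMSEQ_inverse_real_of_nat] by (intro tendsto_intros) auto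
      thus "(\<lambda>n. G (c' n)) \<longlonglongrightarrow> E cv"
        unfolding G_def E_def using c'(2) by (intro NP_size_tendsto_from_below) auto
      have not_in_S: "c' n \<notin> S" for n using cInf_lower[OF _ S_bdd, of "c' n"] c'(2)[of n] by (auto simp: cv_def)
      have "\<alpha> \<le> G (c' n)" for n using not_in_S[of n] c'(1)[of n] by (auto simp: S_def)
      thus "\<exists>N. \<forall>n\<ge>N. \<alpha> \<le> G (c' n)" by blast
    qed
  qed
  ultimately show ?thesis unfolding G_def E_def by blast
qed

lemma NP_constants_exist:
  assumes "(\<integral>y. g y \<partial>N) = 1" "(\<integral>y. h y \<partial>N) = 1" "0 < \<alpha>" "\<alpha> \<le> 1"
  shows "\<exists>cv \<kappa>. is_level_NP N \<alpha> h g cv \<kappa>"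
proof -
  obtain cv where cv: "0 \<le> cv" and G: "(\<integral>y. (if cv * h y < g y then 1 else 0) * h y \<partial>N) \<le> \<alpha>"
    and E: "\<alpha> \<le> (\<integral>y. (if cv * h y \<le> g y then 1 else 0) * h y \<partial>N)"
    using NP_critical_value_exists[OF assms] by blast
  define G' where "G' = (\<integral>y. (if cv * h y < g y then 1 else 0) * h y \<partial>N)"
  define P where "P = (\<integral>y. (if g y = cv * h y then 1 else 0) * h y \<partial>N)"
  have [measurable]: "g \<in> borel_measurable N" "h \<in> borel_measurable N" using g(1) h(1) by auto
  have "(\<lambda>y. if g y = cv * h y then 1 else 0) \<in> Phi N" by (rule Phi_indicator) measurable
  hence int: "integrable N (\<lambda>y. (if cv * h y < g y then 1 else 0) * h y)"
    "integrable N (\<lambda>y. (if g y = cv * h y then 1 else 0) * h y)"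
    using NP_indicators_Phi(1)[of cv] h(1) by (auto intro: integrable_Phi_mult)
  have "(\<integral>y. (if cv * h y \<le> g y then 1 else 0) * h y \<partial>N)
      = (\<integral>y. (if cv * h y < g y then 1 else 0) * h y + (if g y = cv * h y then 1 else 0) * h y \<partial>N)"
    by (intro Bochner_Integration.integral_cong) auto
  hence EGP: "\<alpha> \<le> G' + P" using E int by (simp add: G'_def P_def)
  have "0 \<le> P" unfolding P_def using h(2) by (intro Bochner_Integration.integral_nonneg) auto
  define \<kappa> where "\<kappa> = (if P = 0 then 0 else (\<alpha> - G') / P)"
  have \<kappa>: "0 \<le> \<kappa>" "\<kappa> \<le> 1" "G' + \<kappa> * P = \<alpha>"
    using G EGP \<open>0 \<le> P\<close> by (auto simp: \<kappa>_def G'_def field_simps)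
  have "(\<integral>y. NP_test h g cv \<kappa> y * h y \<partial>N)
      = (\<integral>y. (if cv * h y < g y then 1 else 0) * h y + \<kappa> * ((if g y = cv * h y then 1 else 0) * h y) \<partial>N)"
    unfolding NP_test_def by (intro Bochner_Integration.integral_cong) auto
  also have "\<dots> = G' + \<kappa> * P" using int by (simp add: G'_def P_def)
  finally show ?thesis using cv \<kappa> unfolding is_level_NP_def by auto
qed

end

section \<open>The testing problem and its Lagrangian dual\<close>

locale testing_problem = density_family N f Theta
  for N :: "'y measure" and f :: "'t::topological_space \<Rightarrow> 'y \<Rightarrow> real" and Theta :: "'t set" +
  fixes Theta0 Theta1 :: "'t set" and \<alpha> :: real and \<phi>ah :: "'y \<Rightarrow> real" and \<Omega> :: "'t measure"
  assumes Theta0_subset: "Theta0 \<subseteq> Theta" and Theta1_subset: "Theta1 \<subseteq> Theta"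
    and alpha: "0 < \<alpha>" "\<alpha> < 1"
    and \<phi>ah_level: "\<phi>ah \<in> Phi_alpha N f Theta0 \<alpha>"
    and \<Omega>: "\<Omega> \<in> prob_distributions_on Theta1"
begin

abbreviation "g \<equiv> mix \<Omega> f"
abbreviation "J \<equiv> objP N \<phi>ah g"
abbreviation "lag \<phi> \<Lambda> \<equiv> lagr N f \<alpha> \<phi>ah g \<phi> \<Lambda>"
abbreviation "dual \<Lambda> \<equiv> dualf N f \<alpha> \<phi>ah g \<Lambda>"
abbreviation "power_ah \<equiv> \<integral>y. \<phi>ah y * g y \<partial>N"

lemma \<Omega>_finite: "\<Omega> \<in> finite_measures_on Theta1"
  using \<Omega> prob_distributions_on_subset by blast

lemma g_measurable: "g \<in> borel_measurable N"
  and g_nonneg: "y \<in> space N \<Longrightarrow> 0 \<le> g y"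
  and g_integrable: "integrable N g"
  using mix_measurable mix_nonneg mix_integrable \<Omega>_finite Theta1_subset by auto

lemma integral_g: "(\<integral>y. g y \<partial>N) = 1"
  using integral_mix_total[OF \<Omega>_finite Theta1_subset] \<Omega>
  by (simp add: prob_distributions_on_def prob_space.prob_space)

lemma \<phi>ah_Phi: "\<phi>ah \<in> Phi N"
  using \<phi>ah_level by (simp add: Phi_alpha_def)

lemma objP_eq: "\<phi> \<in> Phi N \<Longrightarrow> J \<phi> = (\<integral>y. \<phi> y * g y \<partial>N) - power_ah"
  unfolding objP_def left_diff_distrib
  using integrable_Phi_mult[OF g_integrable] \<phi>ah_Phi by (intro Bochner_Integration.integral_diff) auto

lemma integral_Phi_g_le: "\<phi> \<in> Phi N \<Longrightarrow> (\<integral>y. \<phi> y * g y \<partial>N) \<le> 1"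
  using abs_integral_bounded_mult_le[OF g_integrable g_nonneg Phi_measurable Phi_abs_le] integral_g
  by fastforce

lemma power_ah_nonneg: "0 \<le> power_ah"
  using Phi_bounds[OF \<phi>ah_Phi] g_nonneg by (intro Bochner_Integration.integral_nonneg) auto

lemma objP_le_1: "\<phi> \<in> Phi N \<Longrightarrow> J \<phi> \<le> 1"
  using objP_eq integral_Phi_g_le power_ah_nonneg by fastforce

lemma convex_objP_ge: "convex {\<phi> \<in> Phi N. v \<le> J \<phi>}"
proof (rule convexI)
  fix \<phi> \<psi> and u w :: real
  assume \<phi>: "\<phi> \<in> {\<phi> \<in> Phi N. v \<le> J \<phi>}" and \<psi>: "\<psi> \<in> {\<phi> \<in> Phi N. v \<le> J \<phi>}"
    and uw: "0 \<le> u" "0 \<le> w" "u + w = 1"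
  have comb: "u *\<^sub>R \<phi> + w *\<^sub>R \<psi> \<in> Phi N" using convexD[OF convex_Phi] \<phi> \<psi> uw by blast
  have "J (u *\<^sub>R \<phi> + w *\<^sub>R \<psi>) = u * (\<integral>y. \<phi> y * g y \<partial>N) + w * (\<integral>y. \<psi> y * g y \<partial>N) - power_ah"
    using objP_eq[OF comb] integral_Phi_convex_comb[OF g_integrable, of \<phi> \<psi> u w] \<phi> \<psi> by simp
  also have "\<dots> = u * J \<phi> + w * J \<psi>"
    using \<phi> \<psi> uw(3) by (simp add: objP_eq algebra_simps flip: distrib_right)
  also have "\<dots> \<ge> u * v + w * v" using \<phi> \<psi> uw by (intro add_mono mult_left_mono) auto
  finally show "u *\<^sub>R \<phi> + w *\<^sub>R \<psi> \<in> {\<phi> \<in> Phi N. v \<le> J \<phi>}" using comb uw by (simp flip: distrib_right)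
qed

lemma ae_closed_objP_ge: "ae_closed N {\<phi> \<in> Phi N. v \<le> J \<phi>}"
  unfolding ae_closed_def
proof (intro allI impI)
  fix s \<phi> assume s: "\<forall>n. s n \<in> {\<phi> \<in> Phi N. v \<le> J \<phi>}" and \<phi>: "\<phi> \<in> Phi N"
    and lim: "AE y in N. (\<lambda>n. s n y) \<longlonglongrightarrow> \<phi> y"
  have "(\<lambda>n. \<integral>y. s n y * g y \<partial>N) \<longlonglongrightarrow> (\<integral>y. \<phi> y * g y \<partial>N)"
  proof (rule tendsto_integral_Phi_mult[OF g_integrable])
    show "AE y in N. (\<lambda>n. s n y * g y) \<longlonglongrightarrow> \<phi> y * g y"
      using lim by eventually_elim (rule tendsto_mult_right)
  qed (use s \<phi> in auto)
  hence "(\<lambda>n. J (s n)) \<longlonglongrightarrow> J \<phi>" using s \<phi> by (simp add: objP_eq tendsto_diff)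
  hence "v \<le> J \<phi>" by (rule LIMSEQ_le_const) (use s in auto)
  thus "\<phi> \<in> {\<phi> \<in> Phi N. v \<le> J \<phi>}" using \<phi> by simp
qed

lemma objP_maximum_exists:
  "\<exists>\<phi>\<in>Phi_alpha N f Theta0 \<alpha>. \<forall>\<psi>\<in>Phi_alpha N f Theta0 \<alpha>. J \<psi> \<le> J \<phi>"
proof -
  interpret sigma_finite_measure N by (rule sigma_finite)
  have superlevel: "{\<phi> \<in> Phi_alpha N f Theta0 \<alpha>. v \<le> J \<phi>} = Phi_alpha N f Theta0 \<alpha> \<inter> {\<phi> \<in> Phi N. v \<le> J \<phi>}"
    for v using Phi_alpha_imp_Phi by blast
  show ?thesis
  proof (rule Phi_Sup_attained)
    show "Phi_alpha N f Theta0 \<alpha> \<noteq> {}" using \<phi>ah_level by blast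
    show "bdd_above (J ` Phi_alpha N f Theta0 \<alpha>)"
      using Phi_alpha_imp_Phi objP_le_1 by (intro bdd_aboveI[of _ 1]) blast
    show "convex {\<phi> \<in> Phi_alpha N f Theta0 \<alpha>. v \<le> J \<phi>}" for v
      unfolding superlevel by (intro convex_Int convex_Phi_alpha Theta0_subset convex_objP_ge)
    show "ae_closed N {\<phi> \<in> Phi_alpha N f Theta0 \<alpha>. v \<le> J \<phi>}" for v
      unfolding superlevel by (intro ae_closed_Int ae_closed_Phi_alpha Theta0_subset ae_closed_objP_ge)
  qed (auto intro: Phi_alpha_imp_Phi)
qed

lemma lagr_eq:
  assumes L: "L \<in> finite_measures_on Theta0" and \<phi>: "\<phi> \<in> Phi N"
  shows "lag \<phi> L = (\<integral>y. \<phi> y * (g y - mix L f y) \<partial>N) - power_ah + \<alpha> * measure L (space L)"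
proof -
  interpret finite_measure L using L by (simp add: finite_measures_on_def)
  have "integrable L (\<lambda>\<theta>. \<integral>y. \<phi> y * f \<theta> y \<partial>N)"
    using test_integral_measurable[OF L Theta0_subset Phi_measurable[OF \<phi>]] abs_test_integral_le[OF _ \<phi>]
      Theta0_subset space_finite_measures_on[OF L]
    by (intro integrable_const_bound[where B=1]) auto
  hence "(\<integral>\<theta>. (\<integral>y. \<phi> y * f \<theta> y \<partial>N) - \<alpha> \<partial>L) = (\<integral>y. \<phi> y * mix L f y \<partial>N) - \<alpha> * measure L (space L)"
    using integral_mix[OF L Theta0_subset Phi_measurable[OF \<phi>] Phi_abs_le[OF \<phi>]] by simp
  moreover have "(\<integral>y. \<phi> y * (g y - mix L f y) \<partial>N) = (\<integral>y. \<phi> y * g y \<partial>N) - (\<integral>y. \<phi> y * mix L f y \<partial>N)"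
    using integrable_Phi_mult[OF g_integrable \<phi>] integrable_Phi_mult[OF mix_integrable[OF L Theta0_subset] \<phi>]
    by (simp add: right_diff_distrib)
  ultimately show ?thesis by (simp add: lagr_def objP_eq[OF \<phi>])
qed

lemma lagr_indicator_Phi: "L \<in> finite_measures_on Theta0 \<Longrightarrow> (\<lambda>y. if mix L f y < g y then 1 else 0) \<in> Phi N"
  using Phi_indicator_positive[of "\<lambda>y. g y - mix L f y" N] g_measurable mix_measurable[of L Theta0]
    Theta0_subset by simp

lemma lagr_le_indicator:
  assumes L: "L \<in> finite_measures_on Theta0" and \<phi>: "\<phi> \<in> Phi N"
  shows "lag \<phi> L \<le> lag (\<lambda>y. if mix L f y < g y then 1 else 0) L"
  using integral_Phi_mult_le_indicator[OF _ \<phi>, of "\<lambda>y. g y - mix L f y"]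
    g_integrable mix_integrable[OF L Theta0_subset]
  by (simp add: lagr_eq[OF L \<phi>] lagr_eq[OF L lagr_indicator_Phi[OF L]])

lemma dualf_eq:
  assumes L: "L \<in> finite_measures_on Theta0"
  shows "dual L = lag (\<lambda>y. if mix L f y < g y then 1 else 0) L"
  unfolding dualf_def using lagr_indicator_Phi[OF L] lagr_le_indicator[OF L]
  by (intro cSup_eq_maximum) auto

lemma lagr_le_dualf: "L \<in> finite_measures_on Theta0 \<Longrightarrow> \<phi> \<in> Phi N \<Longrightarrow> lag \<phi> L \<le> dual L"
  using lagr_le_indicator dualf_eq by simp

lemma lagr_maximizer_AE:
  assumes L: "L \<in> finite_measures_on Theta0" and \<phi>: "\<phi> \<in> Phi N"
    and max: "lag (\<lambda>y. if mix L f y < g y then 1 else 0) L \<le> lag \<phi> L"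
  shows "AE y in N. (mix L f y < g y \<longrightarrow> \<phi> y = 1) \<and> (g y < mix L f y \<longrightarrow> \<phi> y = 0)"
  using Phi_maximizer_AE_indicator[OF _ \<phi>, of "\<lambda>y. g y - mix L f y"] max
    g_integrable mix_integrable[OF L Theta0_subset]
  by (simp add: lagr_eq[OF L \<phi>] lagr_eq[OF L lagr_indicator_Phi[OF L]])

lemma objP_le_lagr:
  assumes L: "L \<in> finite_measures_on Theta0" and \<phi>: "\<phi> \<in> Phi_alpha N f Theta0 \<alpha>"
  shows "J \<phi> \<le> lag \<phi> L"
proof -
  have "0 \<le> (\<integral>\<theta>. - ((\<integral>y. \<phi> y * f \<theta> y \<partial>N) - \<alpha>) \<partial>L)"
    using \<phi> space_finite_measures_on[OF L] by (intro Bochner_Integration.integral_nonneg) (auto simp: Phi_alpha_def)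
  hence "(\<integral>\<theta>. (\<integral>y. \<phi> y * f \<theta> y \<partial>N) - \<alpha> \<partial>L) \<le> 0"
    unfolding Bochner_Integration.integral_minus by linarith
  thus ?thesis by (simp add: lagr_def)
qed

lemma objP_le_dualf: "L \<in> finite_measures_on Theta0 \<Longrightarrow> \<phi> \<in> Phi_alpha N f Theta0 \<alpha> \<Longrightarrow> J \<phi> \<le> dual L"
  using objP_le_lagr lagr_le_dualf Phi_alpha_imp_Phi by (meson order_trans)

abbreviation "optimal_value \<equiv> SUP \<phi>\<in>Phi_alpha N f Theta0 \<alpha>. J \<phi>"

lemma objP_le_optimal_value: "\<phi> \<in> Phi_alpha N f Theta0 \<alpha> \<Longrightarrow> J \<phi> \<le> optimal_value"
  by (rule cSUP_upper) (auto intro!: bdd_aboveI[of _ 1] objP_le_1 intro: Phi_alpha_imp_Phi)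

lemma concave_on_objP: "concave_on (Phi N) J"
  unfolding concave_on_iff
proof (intro conjI convex_Phi ballI allI impI)
  fix \<phi> \<psi> and u w :: real assume "\<phi> \<in> Phi N" "\<psi> \<in> Phi N" "0 \<le> u" "0 \<le> w" "u + w = 1"
  moreover from this have "u *\<^sub>R \<phi> + w *\<^sub>R \<psi> \<in> Phi N" using convexD[OF convex_Phi] by blast
  ultimately show "u * J \<phi> + w * J \<psi> \<le> J (u *\<^sub>R \<phi> + w *\<^sub>R \<psi>)"
    using integral_Phi_convex_comb[OF g_integrable, of \<phi> \<psi> u w]
    by (simp add: objP_eq algebra_simps flip: distrib_right)
qed

lemma convex_on_test_integral: "\<theta> \<in> Theta \<Longrightarrow> convex_on (Phi N) (\<lambda>\<phi>. (\<integral>y. \<phi> y * f \<theta> y \<partial>N) - \<alpha>)"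
  unfolding convex_on_def
proof (intro conjI convex_Phi ballI allI impI)
  fix \<phi> \<psi> and u w :: real assume "\<theta> \<in> Theta" "\<phi> \<in> Phi N" "\<psi> \<in> Phi N" "0 \<le> u" "0 \<le> w" "u + w = 1"
  hence "(\<integral>y. (u *\<^sub>R \<phi> + w *\<^sub>R \<psi>) y * f \<theta> y \<partial>N) - \<alpha>
      = u * (\<integral>y. \<phi> y * f \<theta> y \<partial>N) + w * (\<integral>y. \<psi> y * f \<theta> y \<partial>N) - (u + w) * \<alpha>"
    using integral_Phi_convex_comb[OF density_integrable, of \<theta> \<phi> \<psi> u w] by simp
  also have "\<dots> = u * ((\<integral>y. \<phi> y * f \<theta> y \<partial>N) - \<alpha>) + w * ((\<integral>y. \<psi> y * f \<theta> y \<partial>N) - \<alpha>)"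
    by (simp add: algebra_simps)
  finally show "(\<integral>y. (u *\<^sub>R \<phi> + w *\<^sub>R \<psi>) y * f \<theta> y \<partial>N) - \<alpha>
      \<le> u * ((\<integral>y. \<phi> y * f \<theta> y \<partial>N) - \<alpha>) + w * ((\<integral>y. \<psi> y * f \<theta> y \<partial>N) - \<alpha>)" by simp
qed

lemma finitely_many_constraints_suffice:
  assumes e: "0 < e"
  shows "\<exists>T. finite T \<and> T \<subseteq> Theta0 \<and> (\<forall>\<phi>\<in>Phi_alpha N f T \<alpha>. J \<phi> < optimal_value + e)"
proof (rule ccontr)
  interpret sigma_finite_measure N by (rule sigma_finite)
  define K where "K T = Phi_alpha N f T \<alpha> \<inter> {\<phi> \<in> Phi N. optimal_value + e \<le> J \<phi>}" for T
  assume contra: "\<not> ?thesis"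
  have nonempty: "K T \<noteq> {}" if T: "finite T" "T \<subseteq> Theta0" for T
  proof -
    obtain \<phi> where "\<phi> \<in> Phi_alpha N f T \<alpha>" "\<not> J \<phi> < optimal_value + e" using contra T by blast
    thus ?thesis unfolding K_def by (auto simp: not_less dest: Phi_alpha_imp_Phi)
  qed
  have "\<Inter>(K ` {T. finite T \<and> T \<subseteq> Theta0}) \<noteq> {}"
  proof (rule directed_Inter_Phi_nonempty)
    fix K' assume "K' \<in> K ` {T. finite T \<and> T \<subseteq> Theta0}"
    then obtain T where T: "finite T" "T \<subseteq> Theta0" and K': "K' = K T" by blast
    have "convex (K T)" unfolding K_def
      using T(2) Theta0_subset by (intro convex_Int convex_Phi_alpha convex_objP_ge) auto
    moreover have "ae_closed N (K T)" unfolding K_def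
      using T(2) Theta0_subset by (intro ae_closed_Int ae_closed_Phi_alpha ae_closed_objP_ge) auto
    moreover have "K T \<subseteq> Phi N" unfolding K_def using Phi_alpha_imp_Phi by blast
    ultimately show "K' \<noteq> {} \<and> K' \<subseteq> Phi N \<and> convex K' \<and> ae_closed N K'"
      using nonempty[OF T] K' by blast
  next
    fix A B assume "A \<in> K ` {T. finite T \<and> T \<subseteq> Theta0}" "B \<in> K ` {T. finite T \<and> T \<subseteq> Theta0}"
    then obtain T T' where "finite T" "T \<subseteq> Theta0" "A = K T" "finite T'" "T' \<subseteq> Theta0" "B = K T'"
      by blast
    moreover have "K (T \<union> T') \<subseteq> K T \<inter> K T'" by (auto simp: K_def Phi_alpha_Un)
    ultimately show "\<exists>C\<in>K ` {T. finite T \<and> T \<subseteq> Theta0}. C \<subseteq> A \<inter> B" by blast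
  qed blast
  then obtain \<phi> where \<phi>: "\<And>T. finite T \<Longrightarrow> T \<subseteq> Theta0 \<Longrightarrow> \<phi> \<in> K T" by blast
  have "\<phi> \<in> Phi_alpha N f {\<theta>} \<alpha>" if "\<theta> \<in> Theta0" for \<theta> using \<phi>[of "{\<theta>}"] that by (simp add: K_def)
  hence "\<phi> \<in> Phi_alpha N f Theta0 \<alpha>" using \<phi>[of "{}"] by (auto simp: Phi_alpha_def K_def)
  moreover have "optimal_value + e \<le> J \<phi>" using \<phi>[of "{}"] by (simp add: K_def)
  ultimately show False using objP_le_optimal_value[of \<phi>] e by linarith
qed

lemma dualf_approximates_optimal_value:
  assumes e: "0 < e"
  shows "\<exists>L\<in>finite_measures_on Theta0. dual L \<le> optimal_value + e"
proof -
  obtain T where T: "finite T" "T \<subseteq> Theta0" and small: "\<And>\<phi>. \<phi> \<in> Phi_alpha N f T \<alpha> \<Longrightarrow> J \<phi> < optimal_value + e"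
    using finitely_many_constraints_suffice[OF e] by blast
  have "\<exists>\<mu>. (\<forall>\<theta>\<in>T. 0 \<le> \<mu> \<theta>) \<and>
      (\<forall>\<phi>\<in>Phi N. J \<phi> - (\<Sum>\<theta>\<in>T. \<mu> \<theta> * ((\<integral>y. \<phi> y * f \<theta> y \<partial>N) - \<alpha>)) \<le> optimal_value + e)"
  proof (rule Lagrange_multipliers_convex[OF T(1) concave_on_objP])
    show "convex_on (Phi N) (\<lambda>\<phi>. (\<integral>y. \<phi> y * f \<theta> y \<partial>N) - \<alpha>)" if "\<theta> \<in> T" for \<theta>
      using that T(2) Theta0_subset by (intro convex_on_test_integral) auto
    show "J \<phi> \<le> optimal_value + e" if "\<phi> \<in> Phi N" "\<forall>\<theta>\<in>T. (\<integral>y. \<phi> y * f \<theta> y \<partial>N) - \<alpha> \<le> 0" for \<phi>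
      using small[of \<phi>] that by (simp add: Phi_alpha_def)
    show "(\<integral>y. 0 * f \<theta> y \<partial>N) - \<alpha> < 0" for \<theta> using alpha by simp
  qed (rule Phi_zero)
  then obtain \<mu> where \<mu>: "\<And>\<theta>. \<theta> \<in> T \<Longrightarrow> 0 \<le> \<mu> \<theta>"
    and bound: "\<And>\<phi>. \<phi> \<in> Phi N \<Longrightarrow> J \<phi> - (\<Sum>\<theta>\<in>T. \<mu> \<theta> * ((\<integral>y. \<phi> y * f \<theta> y \<partial>N) - \<alpha>)) \<le> optimal_value + e"
    by blast
  obtain L where L: "L \<in> finite_measures_on Theta0"
    and integral_L: "\<And>h. h \<in> borel_measurable L \<Longrightarrow> (\<integral>\<theta>. h \<theta> \<partial>L) = (\<Sum>\<theta>\<in>T. \<mu> \<theta> * h \<theta>)"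
    using finite_point_masses_exist[OF T, of \<mu>] \<mu> by blast
  have "lag \<phi> L \<le> optimal_value + e" if \<phi>: "\<phi> \<in> Phi N" for \<phi>
    using bound[OF \<phi>] integral_L test_integral_measurable[OF L Theta0_subset Phi_measurable[OF \<phi>]]
    by (simp add: lagr_def)
  hence "dual L \<le> optimal_value + e" using dualf_eq[OF L] lagr_indicator_Phi[OF L] by simp
  thus ?thesis using L by blast
qed

lemma strong_duality: "optimal_value = (INF L\<in>finite_measures_on Theta0. dual L)"
proof (rule antisym)
  have weak: "optimal_value \<le> dual L" if "L \<in> finite_measures_on Theta0" for L
    using \<phi>ah_level objP_le_dualf[OF that] by (intro cSUP_least) auto
  thus "optimal_value \<le> (INF L\<in>finite_measures_on Theta0. dual L)"
    using null_measure_finite_measures_on by (intro cINF_greatest) auto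
  show "(INF L\<in>finite_measures_on Theta0. dual L) \<le> optimal_value"
  proof (rule field_le_epsilon)
    fix e :: real assume "0 < e"
    then obtain L where "L \<in> finite_measures_on Theta0" "dual L \<le> optimal_value + e"
      using dualf_approximates_optimal_value by blast
    moreover have "bdd_below (dual ` finite_measures_on Theta0)"
      using weak by (intro bdd_belowI[of _ optimal_value]) auto
    ultimately show "(INF L\<in>finite_measures_on Theta0. dual L) \<le> optimal_value + e"
      by (meson cINF_lower order_trans)
  qed
qed

abbreviation "dual_minimizers \<equiv>
  {\<Lambda> \<in> finite_measures_on Theta0. \<forall>\<Lambda>'\<in>finite_measures_on Theta0. dual \<Lambda> \<le> dual \<Lambda>'}"

abbreviation "beta \<Lambda> \<equiv> beta_LF N f \<alpha> g \<Lambda>"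

lemma beta_LF_upper:
  "\<phi> \<in> Phi N \<Longrightarrow> (\<integral>y. \<phi> y * mix \<Lambda> f y \<partial>N) \<le> \<alpha> \<Longrightarrow> (\<integral>y. \<phi> y * g y \<partial>N) \<le> beta \<Lambda>"
  unfolding beta_LF_def using integral_Phi_g_le by (intro cSup_upper bdd_aboveI[of _ 1]) auto

lemma beta_LF_least:
  assumes "\<And>\<phi>. \<phi> \<in> Phi N \<Longrightarrow> (\<integral>y. \<phi> y * mix \<Lambda> f y \<partial>N) \<le> \<alpha> \<Longrightarrow> (\<integral>y. \<phi> y * g y \<partial>N) \<le> C"
  shows "beta \<Lambda> \<le> C"
  unfolding beta_LF_def using assms Phi_zero alpha by (intro cSup_least) force+

lemma dualf_minimizer_le_optimal_value: "\<Lambda> \<in> dual_minimizers \<Longrightarrow> dual \<Lambda> \<le> optimal_value"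
  unfolding strong_duality by (intro cINF_greatest) (auto intro: null_measure_finite_measures_on)

lemma optimal_value_le_beta:
  assumes P: "P \<in> prob_distributions_on Theta0"
  shows "optimal_value + power_ah \<le> beta P"
proof -
  have P_fin: "P \<in> finite_measures_on Theta0" using P prob_distributions_on_subset by blast
  interpret prob_space P using P by (simp add: prob_distributions_on_def)
  have "J \<phi> + power_ah \<le> beta P" if \<phi>: "\<phi> \<in> Phi_alpha N f Theta0 \<alpha>" for \<phi>
  proof -
    have \<phi>_Phi: "\<phi> \<in> Phi N" using \<phi> Phi_alpha_imp_Phi by blast
    have "(\<integral>y. \<phi> y * mix P f y \<partial>N) = (\<integral>\<theta>. (\<integral>y. \<phi> y * f \<theta> y \<partial>N) \<partial>P)"
      using integral_mix[OF P_fin Theta0_subset Phi_measurable[OF \<phi>_Phi] Phi_abs_le[OF \<phi>_Phi]] by simp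
    also have "\<dots> \<le> (\<integral>\<theta>. \<alpha> \<partial>P)"
      using \<phi> alpha space_finite_measures_on[OF P_fin] Theta0_subset abs_test_integral_le[OF _ \<phi>_Phi]
        test_integral_measurable[OF P_fin Theta0_subset Phi_measurable[OF \<phi>_Phi]]
      by (intro integral_mono integrable_const_bound[where B=1]) (auto simp: Phi_alpha_def)
    finally have "(\<integral>y. \<phi> y * g y \<partial>N) \<le> beta P" using \<phi>_Phi by (intro beta_LF_upper) (auto simp: prob_space)
    thus ?thesis using objP_eq[OF \<phi>_Phi] by simp
  qed
  hence "optimal_value \<le> beta P - power_ah" using \<phi>ah_level by (intro cSUP_least) (auto simp: field_simps)
  thus ?thesis by simp
qed

lemma beta_normalized_le_dualf:
  assumes L: "L \<in> finite_measures_on Theta0" and pos: "0 < measure L (space L)"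
  shows "beta (scale_measure (ennreal (1 / measure L (space L))) L) \<le> dual L + power_ah"
proof (rule beta_LF_least)
  fix \<phi> assume \<phi>: "\<phi> \<in> Phi N"
    and level: "(\<integral>y. \<phi> y * mix (scale_measure (ennreal (1 / measure L (space L))) L) f y \<partial>N) \<le> \<alpha>"
  have "(\<integral>y. \<phi> y * mix L f y \<partial>N) \<le> \<alpha> * measure L (space L)"
    using level pos by (simp add: mix_scale_measure field_simps)
  hence "(\<integral>y. \<phi> y * g y \<partial>N) - power_ah \<le> lag \<phi> L"
    using integrable_Phi_mult[OF g_integrable \<phi>] integrable_Phi_mult[OF mix_integrable[OF L Theta0_subset] \<phi>]
    by (simp add: lagr_eq[OF L \<phi>] right_diff_distrib)
  thus "(\<integral>y. \<phi> y * g y \<partial>N) \<le> dual L + power_ah" using lagr_le_dualf[OF L \<phi>] by simp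
qed

lemma least_favorable_normalized_dual_minimizer:
  assumes \<Lambda>: "\<Lambda> \<in> dual_minimizers" and pos: "emeasure \<Lambda> (space \<Lambda>) > 0"
  shows "least_favorable N f Theta0 \<alpha> g (scale_measure (ennreal (1 / measure \<Lambda> (space \<Lambda>))) \<Lambda>)"
proof -
  have fin: "\<Lambda> \<in> finite_measures_on Theta0" using \<Lambda> by blast
  interpret finite_measure \<Lambda> using fin by (simp add: finite_measures_on_def)
  have "0 < measure \<Lambda> (space \<Lambda>)" using pos by (simp add: emeasure_eq_measure)
  thus ?thesis
    using normalize_finite_measures_on[OF fin] beta_normalized_le_dualf[OF fin]
      dualf_minimizer_le_optimal_value[OF \<Lambda>] optimal_value_le_beta
    unfolding least_favorable_def by (meson add_right_mono order_trans)
qed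

lemma optimal_test_maximizes_lagr:
  assumes \<Lambda>: "\<Lambda> \<in> dual_minimizers"
    and \<phi>: "\<phi> \<in> Phi_alpha N f Theta0 \<alpha>" "\<forall>\<psi>\<in>Phi_alpha N f Theta0 \<alpha>. J \<psi> \<le> J \<phi>"
  shows "lag (\<lambda>y. if mix \<Lambda> f y < g y then 1 else 0) \<Lambda> \<le> lag \<phi> \<Lambda>"
proof -
  have fin: "\<Lambda> \<in> finite_measures_on Theta0" using \<Lambda> by blast
  have "lag (\<lambda>y. if mix \<Lambda> f y < g y then 1 else 0) \<Lambda> = dual \<Lambda>" by (rule dualf_eq[OF fin, symmetric])
  also have "\<dots> \<le> optimal_value" by (rule dualf_minimizer_le_optimal_value[OF \<Lambda>])
  also have "\<dots> \<le> J \<phi>" using \<phi> by (intro cSUP_least) auto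
  also have "\<dots> \<le> lag \<phi> \<Lambda>" by (rule objP_le_lagr[OF fin \<phi>(1)])
  finally show ?thesis .
qed

lemma optimal_test_AE_eq_indicator:
  assumes \<Lambda>: "\<Lambda> \<in> dual_minimizers"
    and \<phi>: "\<phi> \<in> Phi_alpha N f Theta0 \<alpha>" "\<forall>\<psi>\<in>Phi_alpha N f Theta0 \<alpha>. J \<psi> \<le> J \<phi>"
    and ties: "emeasure N {y \<in> space N. g y = mix \<Lambda> f y} = 0"
  shows "AE y in N. (if mix \<Lambda> f y < g y then 1 else 0) = \<phi> y"
proof -
  have fin: "\<Lambda> \<in> finite_measures_on Theta0" using \<Lambda> by blast
  have "AE y in N. (mix \<Lambda> f y < g y \<longrightarrow> \<phi> y = 1) \<and> (g y < mix \<Lambda> f y \<longrightarrow> \<phi> y = 0)"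
    using lagr_maximizer_AE[OF fin _ optimal_test_maximizes_lagr[OF \<Lambda> \<phi>]] \<phi>(1) Phi_alpha_imp_Phi by blast
  moreover have "AE y in N. g y \<noteq> mix \<Lambda> f y"
  proof (rule AE_I')
    have [measurable]: "g \<in> borel_measurable N" "mix \<Lambda> f \<in> borel_measurable N"
      using g_measurable mix_measurable[OF fin Theta0_subset] by auto
    show "{y \<in> space N. g y = mix \<Lambda> f y} \<in> null_sets N" using ties by (simp add: null_sets_def)
  qed auto
  ultimately show ?thesis by eventually_elim auto
qed

lemma beta_least_favorable_le_dualf:
  assumes lf: "least_favorable N f Theta0 \<alpha> g \<Lambda>" and L: "L \<in> finite_measures_on Theta0"
  shows "beta \<Lambda> \<le> dual L + power_ah"
proof (cases "measure L (space L) = 0")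
  case True
  have "(\<integral>y. 1 * (g y - mix L f y) \<partial>N) = 1"
    using g_integrable mix_integrable[OF L Theta0_subset] integral_g True
    by (simp add: integral_mix_total[OF L Theta0_subset])
  hence "1 - power_ah \<le> dual L" using lagr_le_dualf[OF L Phi_one] True by (simp add: lagr_eq[OF L Phi_one])
  moreover have "beta \<Lambda> \<le> 1" using integral_Phi_g_le by (intro beta_LF_least)
  ultimately show ?thesis by simp
next
  case False
  hence "0 < measure L (space L)" by (simp add: order_less_le)
  hence "beta \<Lambda> \<le> beta (scale_measure (ennreal (1 / measure L (space L))) L)"
    using lf normalize_finite_measures_on[OF L] by (simp add: least_favorable_def)
  also have "\<dots> \<le> dual L + power_ah" by (rule beta_normalized_le_dualf[OF L \<open>0 < _\<close>])
  finally show ?thesis .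
qed

lemma NP_scaled_least_favorable_dual_minimizer:
  assumes lf: "least_favorable N f Theta0 \<alpha> g \<Lambda>" and np: "is_level_NP N \<alpha> (mix \<Lambda> f) g cv \<kappa>"
  shows "scale_measure (ennreal cv) \<Lambda> \<in> dual_minimizers"
proof -
  define C where "C = scale_measure (ennreal cv) \<Lambda>"
  define T where "T = NP_test (mix \<Lambda> f) g cv \<kappa>"
  have \<Lambda>: "\<Lambda> \<in> finite_measures_on Theta0" "prob_space \<Lambda>"
    using lf prob_distributions_on_subset by (auto simp: least_favorable_def prob_distributions_on_def)
  have cv: "0 \<le> cv" "0 \<le> \<kappa>" "\<kappa> \<le> 1" and level: "(\<integral>y. T y * mix \<Lambda> f y \<partial>N) = \<alpha>"
    using np by (auto simp: is_level_NP_def T_def)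
  have C: "C \<in> finite_measures_on Theta0" using scale_measure_finite_measures_on[OF \<Lambda>(1)] by (simp add: C_def)
  have mix_C: "mix C f y = cv * mix \<Lambda> f y" for y using cv(1) by (simp add: C_def mix_scale_measure)
  have "measure C (space C) = cv" using cv(1) \<Lambda>(2) by (simp add: C_def space_scale_measure prob_space.prob_space)
  have T: "T \<in> Phi N"
  proof -
    have [measurable]: "g \<in> borel_measurable N" "mix \<Lambda> f \<in> borel_measurable N"
      using g_measurable mix_measurable[OF \<Lambda>(1) Theta0_subset] by auto
    have "T \<in> borel_measurable N" unfolding T_def NP_test_def[abs_def] by measurable
    thus ?thesis using cv by (auto simp: Phi_def T_def NP_test_def)
  qed
  have "(\<integral>y. (if mix C f y < g y then 1 else 0) * (g y - mix C f y) \<partial>N) = (\<integral>y. T y * (g y - mix C f y) \<partial>N)"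
    by (intro Bochner_Integration.integral_cong) (auto simp: T_def NP_test_def mix_C)
  also have "\<dots> = (\<integral>y. T y * g y \<partial>N) - cv * \<alpha>"
    using integrable_Phi_mult[OF g_integrable T] integrable_Phi_mult[OF mix_integrable[OF \<Lambda>(1) Theta0_subset] T] level
    by (simp add: mix_C right_diff_distrib mult.left_commute)
  finally have "dual C = (\<integral>y. T y * g y \<partial>N) - power_ah"
    using \<open>measure C (space C) = cv\<close> by (simp add: dualf_eq[OF C] lagr_eq[OF C lagr_indicator_Phi[OF C]])
  also have "\<dots> \<le> beta \<Lambda> - power_ah" using beta_LF_upper[OF T] level by simp
  finally have "dual C \<le> dual L" if "L \<in> finite_measures_on Theta0" for L
    using beta_least_favorable_le_dualf[OF lf that] by simp
  thus ?thesis using C by (simp add: C_def)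
qed

abbreviation "optimal_tests \<equiv> {\<phi> \<in> Phi_alpha N f Theta0 \<alpha>. \<forall>\<psi>\<in>Phi_alpha N f Theta0 \<alpha>. J \<psi> \<le> J \<phi>}"

lemma lagr_argmax_form:
  assumes L: "L \<in> finite_measures_on Theta0"
  shows "{\<phi> \<in> Phi N. \<forall>\<psi>\<in>Phi N. lag \<psi> L \<le> lag \<phi> L} \<noteq> {} \<and>
    (\<forall>\<phi>\<in>{\<phi> \<in> Phi N. \<forall>\<psi>\<in>Phi N. lag \<psi> L \<le> lag \<phi> L}. \<exists>\<kappa>\<in>Phi N. AE y in N.
      (g y > mix L f y \<longrightarrow> \<phi> y = 1) \<and> (g y = mix L f y \<longrightarrow> \<phi> y = \<kappa> y) \<and> (g y < mix L f y \<longrightarrow> \<phi> y = 0))"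
proof
  show "{\<phi> \<in> Phi N. \<forall>\<psi>\<in>Phi N. lag \<psi> L \<le> lag \<phi> L} \<noteq> {}"
    using lagr_indicator_Phi[OF L] lagr_le_indicator[OF L] by blast
  show "\<forall>\<phi>\<in>{\<phi> \<in> Phi N. \<forall>\<psi>\<in>Phi N. lag \<psi> L \<le> lag \<phi> L}. \<exists>\<kappa>\<in>Phi N. AE y in N.
      (g y > mix L f y \<longrightarrow> \<phi> y = 1) \<and> (g y = mix L f y \<longrightarrow> \<phi> y = \<kappa> y) \<and> (g y < mix L f y \<longrightarrow> \<phi> y = 0)"
  proof
    fix \<phi> assume "\<phi> \<in> {\<phi> \<in> Phi N. \<forall>\<psi>\<in>Phi N. lag \<psi> L \<le> lag \<phi> L}"
    hence \<phi>: "\<phi> \<in> Phi N" "lag (\<lambda>y. if mix L f y < g y then 1 else 0) L \<le> lag \<phi> L"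
      using lagr_indicator_Phi[OF L] by auto
    show "\<exists>\<kappa>\<in>Phi N. AE y in N.
      (g y > mix L f y \<longrightarrow> \<phi> y = 1) \<and> (g y = mix L f y \<longrightarrow> \<phi> y = \<kappa> y) \<and> (g y < mix L f y \<longrightarrow> \<phi> y = 0)"
      using lagr_maximizer_AE[OF L \<phi>] \<phi>(1) by (intro bexI[of _ \<phi>]) auto
  qed
qed

lemma optimal_tests_AE_unique:
  assumes ties: "\<forall>\<Lambda>\<in>dual_minimizers. emeasure N {y \<in> space N. g y = mix \<Lambda> f y} = 0"
    and \<Lambda>: "\<Lambda>1 \<in> dual_minimizers" "\<Lambda>2 \<in> dual_minimizers" and \<phi>: "\<phi>1 \<in> optimal_tests" "\<phi>2 \<in> optimal_tests"
  shows "AE y in N. (if g y > mix \<Lambda>1 f y then 1 else 0) = (if g y > mix \<Lambda>2 f y then (1::real) else 0) \<and>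
    (if g y > mix \<Lambda>2 f y then 1 else 0) = \<phi>1 y \<and> \<phi>1 y = \<phi>2 y"
proof -
  have "AE y in N. (if g y > mix \<Lambda> f y then 1 else 0) = \<phi> y"
    if "\<Lambda> \<in> dual_minimizers" "\<phi> \<in> optimal_tests" for \<Lambda> \<phi>
    using optimal_test_AE_eq_indicator[of \<Lambda> \<phi>] that ties by auto
  from this[OF \<Lambda>(1) \<phi>(1)] this[OF \<Lambda>(2) \<phi>(1)] this[OF \<Lambda>(2) \<phi>(2)] show ?thesis
    by eventually_elim auto
qed

lemma least_favorable_NP_dual_minimizer:
  assumes lf: "least_favorable N f Theta0 \<alpha> g \<Lambda>"
  shows "(\<exists>cv \<kappa>. is_level_NP N \<alpha> (mix \<Lambda> f) g cv \<kappa>) \<and>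
    (\<forall>cv \<kappa>. is_level_NP N \<alpha> (mix \<Lambda> f) g cv \<kappa> \<longrightarrow> scale_measure (ennreal cv) \<Lambda> \<in> dual_minimizers)"
proof
  have \<Lambda>: "\<Lambda> \<in> finite_measures_on Theta0" "prob_space \<Lambda>"
    using lf prob_distributions_on_subset by (auto simp: least_favorable_def prob_distributions_on_def)
  show "\<exists>cv \<kappa>. is_level_NP N \<alpha> (mix \<Lambda> f) g cv \<kappa>"
    using alpha integral_mix_total[OF \<Lambda>(1) Theta0_subset] prob_space.prob_space[OF \<Lambda>(2)]
      mix_integrable[OF \<Lambda>(1) Theta0_subset] mix_nonneg[OF \<Lambda>(1) Theta0_subset]
    by (intro NP_constants_exist g_integrable g_nonneg integral_g) auto
qed (use NP_scaled_least_favorable_dual_minimizer[OF lf] in blast)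

end

theorem lemma3:
  fixes N :: "'y::metric_space measure"
    and f :: "'t::euclidean_space \<Rightarrow> 'y \<Rightarrow> real"
    and Theta Theta0 Theta1 :: "'t set"
    and \<alpha> :: real and \<phi>ah :: "'y \<Rightarrow> real" and \<Omega> :: "'t measure"
  assumes sigma_fin: "sigma_finite_measure N"
    and sets_N: "sets N = sets borel"
    and joint_meas: "(\<lambda>p. f (fst p) (snd p)) \<in> borel_measurable (restrict_space (borel \<Otimes>\<^sub>M N) (Theta \<times> space N))"
    and dens_nonneg: "\<And>\<theta> y. \<theta> \<in> Theta \<Longrightarrow> y \<in> space N \<Longrightarrow> 0 \<le> f \<theta> y"
    and dens_one: "\<And>\<theta>. \<theta> \<in> Theta \<Longrightarrow> (\<integral>\<^sup>+ y. ennreal (f \<theta> y) \<partial>N) = 1"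
    and sub0: "Theta0 \<subseteq> Theta" and sub1: "Theta1 \<subseteq> Theta"
    and disj: "Theta0 \<inter> Theta1 = {}"
    and borel0: "Theta0 \<in> sets borel" and borel1: "Theta1 \<in> sets borel"
    and alpha: "0 < \<alpha>" "\<alpha> < 1"
    and ah: "\<phi>ah \<in> Phi_alpha N f Theta0 \<alpha>"
    and Omega: "\<Omega> \<in> prob_distributions_on Theta1"
  defines "g \<equiv> mix \<Omega> f"
    and "M0 \<equiv> finite_measures_on Theta0"
    and "PhiStar \<equiv> {\<phi> \<in> Phi_alpha N f Theta0 \<alpha>. \<forall>\<psi>\<in>Phi_alpha N f Theta0 \<alpha>. objP N \<phi>ah (mix \<Omega> f) \<psi> \<le> objP N \<phi>ah (mix \<Omega> f) \<phi>}"
    and "PhiStarL \<equiv> (\<lambda>\<Lambda>. {\<phi> \<in> Phi N. \<forall>\<psi>\<in>Phi N. lagr N f \<alpha> \<phi>ah (mix \<Omega> f) \<psi> \<Lambda> \<le> lagr N f \<alpha> \<phi>ah (mix \<Omega> f) \<phi> \<Lambda>})"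
    and "M0star \<equiv> {\<Lambda> \<in> finite_measures_on Theta0. \<forall>\<Lambda>'\<in>finite_measures_on Theta0. dualf N f \<alpha> \<phi>ah (mix \<Omega> f) \<Lambda> \<le> dualf N f \<alpha> \<phi>ah (mix \<Omega> f) \<Lambda>'}"
  shows
    "PhiStar \<noteq> {}
     \<and> (\<forall>\<Lambda>\<in>M0. PhiStarL \<Lambda> \<noteq> {} \<and>
          (\<forall>\<phi>\<in>PhiStarL \<Lambda>. \<exists>\<kappa>\<in>Phi N. AE y in N.
              (g y > mix \<Lambda> f y \<longrightarrow> \<phi> y = 1) \<and>
              (g y = mix \<Lambda> f y \<longrightarrow> \<phi> y = \<kappa> y) \<and>
              (g y < mix \<Lambda> f y \<longrightarrow> \<phi> y = 0)))
     \<and> (SUP \<phi>\<in>Phi_alpha N f Theta0 \<alpha>. objP N \<phi>ah g \<phi>) = (INF \<Lambda>\<in>M0. dualf N f \<alpha> \<phi>ah g \<Lambda>)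
     \<and> ((M0star \<noteq> {} \<and> (\<forall>\<Lambda>\<in>M0star. emeasure N {y \<in> space N. g y = mix \<Lambda> f y} = 0)) \<longrightarrow>
         (\<forall>\<Lambda>1\<in>M0star. \<forall>\<Lambda>2\<in>M0star. \<forall>\<phi>1\<in>PhiStar. \<forall>\<phi>2\<in>PhiStar. AE y in N.
            (if g y > mix \<Lambda>1 f y then 1 else 0) = (if g y > mix \<Lambda>2 f y then (1::real) else 0) \<and>
            (if g y > mix \<Lambda>2 f y then 1 else 0) = \<phi>1 y \<and>
            \<phi>1 y = \<phi>2 y))
     \<and> (\<forall>\<Lambda>\<in>M0star. emeasure \<Lambda> (space \<Lambda>) > 0 \<longrightarrow>
          least_favorable N f Theta0 \<alpha> g (scale_measure (ennreal (1 / measure \<Lambda> (space \<Lambda>))) \<Lambda>))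
     \<and> (\<forall>\<Lambda>. least_favorable N f Theta0 \<alpha> g \<Lambda> \<longrightarrow>
          (\<exists>cv \<kappa>. is_level_NP N \<alpha> (mix \<Lambda> f) g cv \<kappa>) \<and>
          (\<forall>cv \<kappa>. is_level_NP N \<alpha> (mix \<Lambda> f) g cv \<kappa> \<longrightarrow> scale_measure (ennreal cv) \<Lambda> \<in> M0star))"
proof -
  have "testing_problem N f Theta Theta0 Theta1 \<alpha> \<phi>ah \<Omega>"
    by (intro testing_problem.intro density_family.intro testing_problem_axioms.intro)
      (fact sigma_fin joint_meas dens_nonneg dens_one sub0 sub1 alpha ah Omega)+
  then interpret T: testing_problem N f Theta Theta0 Theta1 \<alpha> \<phi>ah \<Omega> .
  show ?thesis
    unfolding assms(15-19)
    apply (intro conjI)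
    subgoal using T.objP_maximum_exists by blast
    subgoal using T.lagr_argmax_form by blast
    subgoal by (rule T.strong_duality)
    subgoal using T.optimal_tests_AE_unique by blast
    subgoal using T.least_favorable_normalized_dual_minimizer by blast
    subgoal using T.least_favorable_NP_dual_minimizer by blast
    done
qed

end
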